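(* Let $X$ be a proper geodesic hyperbolic space with a proper, isometric, non-elementary action of a group $\Gamma$. Let $G<\Gamma$ be an infinite subgroup of infinite index which is confined in $\Gamma$ with a finite confining subset $P$, and assume every nontrivial element of $P$ is loxodromic. Then $G$ contains infinitely many loxodromic elements $h_n$ escaping to infinity, i.e. $d(o,\mathbf{Ax}_G(h_n))\to\infty$.
   Context: $G<\Gamma$ is confined with confining subset $P$ ($P\subset\Gamma$ finite) if $gGg^{-1}\cap(P\setminus\{1\})\neq\emptyset$ for every $g\in\Gamma$. For loxodromic $g$, $\mathrm{Ax}(g)$ is the union of all bi-infinite geodesics between its fixed points in $\partial X$, and $\mathbf{Ax}_G(g)=\bigcup_{f\in G} f\,\mathrm{Ax}(g)$. *)

theory Defs
  imports "HOL-Analysis.Analysis" "HOL-Algebra.Group" "HOL-Algebra.Coset"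
begin

text \<open>The space X is a type of class heine_borel (closed bounded sets are compact,
i.e. X is a proper metric space).\<close>

definition gromov_prod :: "'a::metric_space \<Rightarrow> 'a \<Rightarrow> 'a \<Rightarrow> real" where
  "gromov_prod w x y = (dist w x + dist w y - dist x y) / 2"

definition gromov_hyperbolic :: "'a::metric_space itself \<Rightarrow> bool" where
  "gromov_hyperbolic _ \<longleftrightarrow> (\<exists>\<delta>::real. \<forall>(w::'a) x y z.
      gromov_prod w x z \<ge> min (gromov_prod w x y) (gromov_prod w y z) - \<delta>)"

definition geodesic_space :: "'a::metric_space itself \<Rightarrow> bool" where
  "geodesic_space _ \<longleftrightarrow> (\<forall>x y::'a. \<exists>\<gamma>::real \<Rightarrow> 'a. \<gamma> 0 = x \<and> \<gamma> (dist x y) = y \<and>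
      (\<forall>s\<in>{0..dist x y}. \<forall>t\<in>{0..dist x y}. dist (\<gamma> s) (\<gamma> t) = \<bar>s - t\<bar>))"

definition isometry :: "('a::metric_space \<Rightarrow> 'a) \<Rightarrow> bool" where
  "isometry f \<longleftrightarrow> surj f \<and> (\<forall>x y. dist (f x) (f y) = dist x y)"

definition isom_action :: "('g, 'b) monoid_scheme \<Rightarrow> ('g \<Rightarrow> 'a::metric_space \<Rightarrow> 'a) \<Rightarrow> bool" where
  "isom_action Gm \<phi> \<longleftrightarrow> group Gm \<and> (\<forall>g\<in>carrier Gm. isometry (\<phi> g)) \<and>
     (\<forall>g\<in>carrier Gm. \<forall>h\<in>carrier Gm. \<phi> (g \<otimes>\<^bsub>Gm\<^esub> h) = \<phi> g \<circ> \<phi> h) \<and>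
     \<phi> \<one>\<^bsub>Gm\<^esub> = id"

definition proper_action :: "('g, 'b) monoid_scheme \<Rightarrow> ('g \<Rightarrow> 'a::metric_space \<Rightarrow> 'a) \<Rightarrow> bool" where
  "proper_action Gm \<phi> \<longleftrightarrow> (\<forall>x r. finite {g\<in>carrier Gm. dist (\<phi> g x) x \<le> r})"

text \<open>Gromov boundary, via sequences converging at infinity (basepoint bp).\<close>
definition conv_inf :: "'a::metric_space \<Rightarrow> (nat \<Rightarrow> 'a) \<Rightarrow> bool" where
  "conv_inf bp x \<longleftrightarrow> (\<forall>M. \<exists>N. \<forall>i\<ge>N. \<forall>j\<ge>N. gromov_prod bp (x i) (x j) \<ge> M)"

definition seq_equiv :: "'a::metric_space \<Rightarrow> (nat \<Rightarrow> 'a) \<Rightarrow> (nat \<Rightarrow> 'a) \<Rightarrow> bool" where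
  "seq_equiv bp x y \<longleftrightarrow> conv_inf bp x \<and> conv_inf bp y \<and>
     (\<forall>M. \<exists>N. \<forall>i\<ge>N. \<forall>j\<ge>N. gromov_prod bp (x i) (y j) \<ge> M)"

definition bdry_pt :: "'a::metric_space \<Rightarrow> (nat \<Rightarrow> 'a) \<Rightarrow> (nat \<Rightarrow> 'a) set" where
  "bdry_pt bp x = {y. seq_equiv bp x y}"

definition limit_set :: "'a::metric_space \<Rightarrow> ('g, 'b) monoid_scheme \<Rightarrow> ('g \<Rightarrow> 'a \<Rightarrow> 'a) \<Rightarrow> (nat \<Rightarrow> 'a) set set" where
  "limit_set bp Gm \<phi> = {bdry_pt bp x | x. conv_inf bp x \<and> (\<forall>n. x n \<in> (\<lambda>g. \<phi> g bp) ` carrier Gm)}"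

definition non_elementary :: "'a::metric_space \<Rightarrow> ('g, 'b) monoid_scheme \<Rightarrow> ('g \<Rightarrow> 'a \<Rightarrow> 'a) \<Rightarrow> bool" where
  "non_elementary bp Gm \<phi> \<longleftrightarrow> (\<exists>\<xi>1 \<xi>2 \<xi>3. {\<xi>1, \<xi>2, \<xi>3} \<subseteq> limit_set bp Gm \<phi> \<and>
      \<xi>1 \<noteq> \<xi>2 \<and> \<xi>1 \<noteq> \<xi>3 \<and> \<xi>2 \<noteq> \<xi>3)"

definition loxodromic :: "'a::metric_space \<Rightarrow> ('g, 'b) monoid_scheme \<Rightarrow> ('g \<Rightarrow> 'a \<Rightarrow> 'a) \<Rightarrow> 'g \<Rightarrow> bool" where
  "loxodromic bp Gm \<phi> g \<longleftrightarrow> g \<in> carrier Gm \<and>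
     lim (\<lambda>n::nat. dist bp (\<phi> (g [^]\<^bsub>Gm\<^esub> n) bp) / real n) > 0"

definition fix_plus where
  "fix_plus bp Gm \<phi> g = bdry_pt bp (\<lambda>n::nat. \<phi> (g [^]\<^bsub>Gm\<^esub> n) bp)"
definition fix_minus where
  "fix_minus bp Gm \<phi> g = bdry_pt bp (\<lambda>n::nat. \<phi> ((inv\<^bsub>Gm\<^esub> g) [^]\<^bsub>Gm\<^esub> n) bp)"

definition geodesic_line :: "(real \<Rightarrow> 'a::metric_space) \<Rightarrow> bool" where
  "geodesic_line \<gamma> \<longleftrightarrow> (\<forall>s t. dist (\<gamma> s) (\<gamma> t) = \<bar>s - t\<bar>)"

definition Ax where
  "Ax bp Gm \<phi> g = \<Union>{range \<gamma> | \<gamma>. geodesic_line \<gamma> \<and>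
      conv_inf bp (\<lambda>n::nat. \<gamma> (real n)) \<and> conv_inf bp (\<lambda>n::nat. \<gamma> (- real n)) \<and>
      {bdry_pt bp (\<lambda>n::nat. \<gamma> (real n)), bdry_pt bp (\<lambda>n::nat. \<gamma> (- real n))}
        = {fix_plus bp Gm \<phi> g, fix_minus bp Gm \<phi> g}}"

definition AxG where
  "AxG bp Gm \<phi> H g = (\<Union>f\<in>H. \<phi> f ` Ax bp Gm \<phi> g)"

definition confined :: "('g, 'b) monoid_scheme \<Rightarrow> 'g set \<Rightarrow> 'g set \<Rightarrow> bool" where
  "confined Gm H P \<longleftrightarrow> finite P \<and> P \<subseteq> carrier Gm \<and>
     (\<forall>g\<in>carrier Gm. {g \<otimes>\<^bsub>Gm\<^esub> h \<otimes>\<^bsub>Gm\<^esub> inv\<^bsub>Gm\<^esub> g | h. h \<in> H} \<inter> (P - {\<one>\<^bsub>Gm\<^esub>}) \<noteq> {})"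

end

(*
  For a loxodromic p, a subsequence of the orbit of the basepoint o under the
  powers of p is a bi-Lipschitz sequence; the four point condition forces every geodesic line
  with the same two ends to stay within a uniform distance D of this orbit (Morse property).
  Such lines exist: geodesic segments from p^-n o to p^n o, recentred near o, have a pointwise
  convergent subsequence by properness of X.

  Given R, properness of the action and the infinite index of G give a coset G k all of whose
  elements move o by more than R + D. Confinement yields h = k p k^-1 in G with p in P - {1}.
  A point of f Ax(h), f in G, lies within D of f k p^i o, and f k p^i = (f h^i) k lies in G k;
  so the whole of Ax_G(h) is at distance more than R from o. Letting R run through larger and
  larger values gives the escaping sequence.
*)
theory Submission
  imports Defs "HOL-Library.Diagonal_Subsequence" "HOL-Algebra.Generated_Groups"
begin

section \<open>Gromov products\<close>

lemma gromov_prod_commute: "gromov_prod w x y = gromov_prod w y x"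
  unfolding gromov_prod_def by (simp add: dist_commute add.commute)

lemma gromov_prod_self: "gromov_prod w x x = dist w x"
  unfolding gromov_prod_def by simp

lemma gromov_prod_le_dist: "gromov_prod w x y \<le> dist w y"
  unfolding gromov_prod_def using dist_triangle[of w x y] by (simp add: dist_commute)

lemma dist_diff_le_gromov_prod: "dist w x - dist x y \<le> gromov_prod w x y"
  unfolding gromov_prod_def using dist_triangle[of w x y] by (simp add: dist_commute)

lemma gromov_prod_lipschitz_left: "gromov_prod w x y - dist x x' \<le> gromov_prod w x' y"
  unfolding gromov_prod_def using dist_triangle[of w x x'] dist_triangle[of x' y x] dist_commute[of x x']
  by (simp add: field_simps)

lemma gromov_prod_lipschitz_right: "gromov_prod w x y - dist y y' \<le> gromov_prod w x y'"
  using gromov_prod_lipschitz_left[of w y x y'] by (simp add: gromov_prod_commute)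

lemma gromov_prod_lipschitz_base: "gromov_prod w x y - dist w w' \<le> gromov_prod w' x y"
  unfolding gromov_prod_def using dist_triangle[of w x w'] dist_triangle[of w y w'] dist_commute[of w w']
  by (simp add: field_simps)

lemma gromov_prod_isometry:
  assumes "\<And>a b. dist (f a) (f b) = dist a b"
  shows "gromov_prod (f w) (f x) (f y) = gromov_prod w x y"
  unfolding gromov_prod_def assms ..

lemma gromov_prod_eq_0_if_between:
  assumes "dist x y + dist y z = dist x z"
  shows "gromov_prod y x z = 0"
  using assms unfolding gromov_prod_def by (simp add: dist_commute)

definition delta_hyperbolic :: "'a::metric_space itself \<Rightarrow> real \<Rightarrow> bool" where
  "delta_hyperbolic _ \<delta> \<longleftrightarrow> (\<forall>w x y z::'a.
     min (gromov_prod w x y) (gromov_prod w y z) - \<delta> \<le> gromov_prod w x z)"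

lemma gromov_hyperbolic_iff: "gromov_hyperbolic TYPE('a) \<longleftrightarrow> (\<exists>\<delta>. delta_hyperbolic TYPE('a::metric_space) \<delta>)"
  unfolding gromov_hyperbolic_def delta_hyperbolic_def by auto

lemma four_point:
  "delta_hyperbolic TYPE('a) \<delta> \<Longrightarrow>
   min (gromov_prod w x y) (gromov_prod w y z) - \<delta> \<le> gromov_prod w x (z::'a::metric_space)"
  unfolding delta_hyperbolic_def by blast

lemma delta_hyperbolic_nonneg: "delta_hyperbolic TYPE('a::metric_space) \<delta> \<Longrightarrow> 0 \<le> \<delta>"
  using four_point[of \<delta> "undefined::'a" undefined undefined undefined] by (simp add: gromov_prod_self)

lemma four_point_twice:
  assumes hyp: "delta_hyperbolic TYPE('a::metric_space) \<delta>"
  shows "min (gromov_prod w x y1) (min (gromov_prod w y1 y2) (gromov_prod w y2 z)) - 2*\<delta>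
    \<le> gromov_prod w x (z::'a)"
  using four_point[OF hyp, of w y1 y2 z] four_point[OF hyp, of w x y1 z] delta_hyperbolic_nonneg[OF hyp]
  by linarith

lemma four_point_chain:
  fixes c :: "nat \<Rightarrow> 'a::metric_space"
  assumes hyp: "delta_hyperbolic TYPE('a) \<delta>"
    and "\<And>k. k < n \<Longrightarrow> A + real (k+1) * \<delta> \<le> gromov_prod y (c k) (c (Suc k))"
    and "A \<le> dist y (c 0)"
  shows "A \<le> gromov_prod y (c 0) (c n)"
  using assms(2,3)
proof (induction n arbitrary: c A)
  case 0
  then show ?case by (simp add: gromov_prod_self)
next
  case (Suc n)
  have first: "A + \<delta> \<le> gromov_prod y (c 0) (c 1)" using Suc.prems(1)[of 0] by simp
  have "A + \<delta> \<le> gromov_prod y ((c \<circ> Suc) 0) ((c \<circ> Suc) n)"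
  proof (rule Suc.IH)
    show "A + \<delta> + real (k + 1) * \<delta> \<le> gromov_prod y ((c \<circ> Suc) k) ((c \<circ> Suc) (Suc k))"
      if "k < n" for k
      using Suc.prems(1)[of "Suc k"] that by (simp add: algebra_simps)
    show "A + \<delta> \<le> dist y ((c \<circ> Suc) 0)"
      using first gromov_prod_le_dist[of y "c 0" "c 1"] by simp
  qed
  then show ?case
    using first four_point[OF hyp, of y "c 0" "c 1" "c (Suc n)"] by simp
qed

lemma gromov_prod_at_closest_point:
  fixes c :: "nat \<Rightarrow> 'a::metric_space"
  assumes hyp: "delta_hyperbolic TYPE('a) \<delta>"
    and closest: "\<And>k. k \<le> n \<Longrightarrow> dist y (c 0) \<le> dist y (c k)"
    and expand: "\<And>k. k \<le> n \<Longrightarrow> ell * real k \<le> dist (c 0) (c k)"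
    and step: "\<And>k. dist (c k) (c (Suc k)) \<le> L"
    and "4*\<delta> \<le> ell"
  shows "dist y (c 0) / 2 - L - \<delta> \<le> gromov_prod y (c 0) (c n)"
proof (rule four_point_chain[OF hyp])
  have "0 \<le> \<delta>" "0 \<le> L"
    using delta_hyperbolic_nonneg[OF hyp] step[of 0] by (auto intro: order_trans[OF zero_le_dist])
  with zero_le_dist[of y "c 0"] show "dist y (c 0) / 2 - L - \<delta> \<le> dist y (c 0)" by linarith
  fix k assume k: "k < n"
  have "real k * \<delta> \<le> ell * real k / 4" using mult_right_mono[OF \<open>4*\<delta> \<le> ell\<close>, of "real k"] by (simp add: mult_ac)
  moreover have "dist y (c 0) \<le> dist y (c k)" and "ell * real k - dist y (c 0) \<le> dist y (c k)"
    using closest[of k] expand[of k] k dist_triangle[of "c 0" "c k" y] by (auto simp: dist_commute)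
  ultimately have "dist y (c 0) / 2 + real k * \<delta> \<le> dist y (c k)" by linarith
  then show "dist y (c 0) / 2 - L - \<delta> + real (k + 1) * \<delta> \<le> gromov_prod y (c k) (c (Suc k))"
    using dist_diff_le_gromov_prod[of y "c k" "c (Suc k)"] step[of k] by (simp add: algebra_simps)
qed

section \<open>Bi-Lipschitz sequences and the Morse property\<close>

definition bilipschitz_seq :: "real \<Rightarrow> real \<Rightarrow> (int \<Rightarrow> 'a::metric_space) \<Rightarrow> bool" where
  "bilipschitz_seq ell L b \<longleftrightarrow> (\<forall>i j. ell * \<bar>real_of_int (i - j)\<bar> \<le> dist (b i) (b j) \<and>
     dist (b i) (b j) \<le> L * \<bar>real_of_int (i - j)\<bar>)"

lemma bilipschitz_seq_lower: "bilipschitz_seq ell L b \<Longrightarrow> ell * \<bar>real_of_int (i - j)\<bar> \<le> dist (b i) (b j)"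
  unfolding bilipschitz_seq_def by blast

lemma bilipschitz_seq_upper: "bilipschitz_seq ell L b \<Longrightarrow> dist (b i) (b j) \<le> L * \<bar>real_of_int (i - j)\<bar>"
  unfolding bilipschitz_seq_def by blast

lemma bilipschitz_seq_step: "bilipschitz_seq ell L b \<Longrightarrow> dist (b i) (b (i + 1)) \<le> L"
  using bilipschitz_seq_upper[of ell L b i "i + 1"] by simp

lemma bilipschitz_seq_upper_nonneg:
  assumes "bilipschitz_seq ell L b"
  shows "0 \<le> L"
  using bilipschitz_seq_step[OF assms, of 0] by (simp add: order_trans[OF zero_le_dist])

lemma bilipschitz_seq_reflect:
  assumes "bilipschitz_seq ell L b"
  shows "bilipschitz_seq ell L (\<lambda>i. b (- i))"
  unfolding bilipschitz_seq_def
  using bilipschitz_seq_lower[OF assms] bilipschitz_seq_upper[OF assms]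
  by (metis abs_minus_commute minus_diff_eq minus_diff_minus of_int_diff)

lemma gromov_prod_at_closest_point_bilipschitz_seq:
  fixes b :: "int \<Rightarrow> 'a::metric_space"
  assumes hyp: "delta_hyperbolic TYPE('a) \<delta>" and bl: "bilipschitz_seq ell L b" and "4*\<delta> \<le> ell"
    and "i0 \<le> j"
    and closest: "\<And>i. i0 \<le> i \<Longrightarrow> i \<le> j \<Longrightarrow> dist y (b i0) \<le> dist y (b i)"
  shows "dist y (b i0) / 2 - L - \<delta> \<le> gromov_prod y (b i0) (b j)"
proof -
  define c where "c k = b (i0 + int k)" for k
  have "dist y (c 0) / 2 - L - \<delta> \<le> gromov_prod y (c 0) (c (nat (j - i0)))"
  proof (rule gromov_prod_at_closest_point[OF hyp])
    show "dist y (c 0) \<le> dist y (c k)" if "k \<le> nat (j - i0)" for k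
      using closest[of "i0 + int k"] that \<open>i0 \<le> j\<close> unfolding c_def by simp
    show "ell * real k \<le> dist (c 0) (c k)" for k
      using bilipschitz_seq_lower[OF bl, of i0 "i0 + int k"] unfolding c_def by simp
    show "dist (c k) (c (Suc k)) \<le> L" for k
      using bilipschitz_seq_step[OF bl, of "i0 + int k"] unfolding c_def by (simp add: add_ac)
  qed fact
  then show ?thesis using \<open>i0 \<le> j\<close> unfolding c_def by simp
qed

lemma bilipschitz_seq_near_small_gromov_prod:
  fixes b :: "int \<Rightarrow> 'a::metric_space"
  assumes hyp: "delta_hyperbolic TYPE('a) \<delta>" and bl: "bilipschitz_seq ell L b" and dl: "4*\<delta> \<le> ell"
    and "j \<le> j'" and small: "gromov_prod y (b j) (b j') \<le> C"
  shows "\<exists>i. j \<le> i \<and> i \<le> j' \<and> dist y (b i) \<le> 2 * (C + L + 2*\<delta>)"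
proof -
  obtain i0 where "is_arg_min (\<lambda>i. dist y (b i)) (\<lambda>i. i \<in> {j..j'}) i0"
    using ex_is_arg_min_if_finite[of "{j..j'}"] \<open>j \<le> j'\<close> by fastforce
  then have i0: "j \<le> i0" "i0 \<le> j'" and closest: "\<And>i. j \<le> i \<Longrightarrow> i \<le> j' \<Longrightarrow> dist y (b i0) \<le> dist y (b i)"
    unfolding is_arg_min_def by (auto simp: not_less)
  have right: "dist y (b i0) / 2 - L - \<delta> \<le> gromov_prod y (b i0) (b j')"
    using gromov_prod_at_closest_point_bilipschitz_seq[OF hyp bl dl i0(2)] closest i0 by simp
  have "dist y (b (- (- i0))) / 2 - L - \<delta> \<le> gromov_prod y (b (- (- i0))) (b (- (- j)))"
    using gromov_prod_at_closest_point_bilipschitz_seq[OF hyp bilipschitz_seq_reflect[OF bl] dl, of "- i0" "- j" y]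
      closest i0 by simp
  then have left: "dist y (b i0) / 2 - L - \<delta> \<le> gromov_prod y (b j) (b i0)"
    by (simp add: gromov_prod_commute)
  have "dist y (b i0) \<le> 2 * (C + L + 2*\<delta>)"
    using four_point[OF hyp, of y "b j" "b i0" "b j'"] left right small by simp
  then show ?thesis using i0 by blast
qed

lemma between_near_bilipschitz_seq:
  fixes b :: "int \<Rightarrow> 'a::metric_space"
  assumes hyp: "delta_hyperbolic TYPE('a) \<delta>" and bl: "bilipschitz_seq ell L b" and dl: "4*\<delta> \<le> ell"
    and between: "dist x y + dist y z = dist x z"
    and "i \<le> j" and "dist x (b i) \<le> A" and "dist z (b j) \<le> A"
  shows "\<exists>k. i \<le> k \<and> k \<le> j \<and> dist y (b k) \<le> 2 * (2*A + L + 2*\<delta>)"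
proof (rule bilipschitz_seq_near_small_gromov_prod[OF hyp bl dl \<open>i \<le> j\<close>])
  show "gromov_prod y (b i) (b j) \<le> 2*A"
    using gromov_prod_eq_0_if_between[OF between] gromov_prod_lipschitz_left[of y "b i" "b j" x]
      gromov_prod_lipschitz_right[of y x "b j" z] assms(6,7) by (simp add: dist_commute)
qed

section \<open>Ends of sequences\<close>

definition same_end :: "'a::metric_space \<Rightarrow> (nat \<Rightarrow> 'a) \<Rightarrow> (nat \<Rightarrow> 'a) \<Rightarrow> bool" where
  "same_end w x y \<longleftrightarrow> (\<forall>M. \<exists>N. \<forall>i\<ge>N. \<forall>j\<ge>N. M \<le> gromov_prod w (x i) (y j))"

lemma conv_inf_iff_same_end: "conv_inf w x \<longleftrightarrow> same_end w x x"
  unfolding conv_inf_def same_end_def ..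

lemma same_end_sym: "same_end w x y \<Longrightarrow> same_end w y x"
  unfolding same_end_def by (metis gromov_prod_commute)

lemma same_end_basepoint:
  assumes "same_end w x y"
  shows "same_end w' x y"
  unfolding same_end_def
proof
  fix M
  obtain N where N: "\<forall>i\<ge>N. \<forall>j\<ge>N. M + dist w w' \<le> gromov_prod w (x i) (y j)"
    using assms unfolding same_end_def by blast
  have "M \<le> gromov_prod w' (x i) (y j)" if "N \<le> i" "N \<le> j" for i j
    using N that gromov_prod_lipschitz_base[of w "x i" "y j" w'] by fastforce
  then show "\<exists>N. \<forall>i\<ge>N. \<forall>j\<ge>N. M \<le> gromov_prod w' (x i) (y j)" by blast
qed

lemma same_end_close:
  assumes "same_end w x y" and close: "\<And>j. dist (y' j) (y (\<sigma> j)) \<le> c"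
    and \<sigma>: "filterlim \<sigma> at_top sequentially"
  shows "same_end w x y'"
  unfolding same_end_def
proof
  fix M
  obtain N where N: "\<forall>i\<ge>N. \<forall>j\<ge>N. M + c \<le> gromov_prod w (x i) (y j)"
    using assms unfolding same_end_def by blast
  obtain N' where N': "\<forall>j\<ge>N'. N \<le> \<sigma> j"
    using \<sigma> unfolding filterlim_at_top eventually_sequentially by blast
  have "M \<le> gromov_prod w (x i) (y' j)" if "max N N' \<le> i" "max N N' \<le> j" for i j
  proof -
    have "M + c \<le> gromov_prod w (x i) (y (\<sigma> j))" using N N' that by simp
    then show ?thesis
      using close[of j] gromov_prod_lipschitz_right[of w "x i" "y (\<sigma> j)" "y' j"] by (simp add: dist_commute)
  qed
  then show "\<exists>N. \<forall>i\<ge>N. \<forall>j\<ge>N. M \<le> gromov_prod w (x i) (y' j)" by blast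
qed

lemma same_end_trans:
  assumes hyp: "delta_hyperbolic TYPE('a::metric_space) \<delta>"
    and "same_end w x y" "same_end w y (z :: nat \<Rightarrow> 'a)"
  shows "same_end w x z"
  unfolding same_end_def
proof
  fix M
  obtain N1 where N1: "\<forall>i\<ge>N1. \<forall>j\<ge>N1. M + \<delta> \<le> gromov_prod w (x i) (y j)"
    using assms(2) unfolding same_end_def by blast
  obtain N2 where N2: "\<forall>i\<ge>N2. \<forall>j\<ge>N2. M + \<delta> \<le> gromov_prod w (y i) (z j)"
    using assms(3) unfolding same_end_def by blast
  define N where "N = max N1 N2"
  have "M \<le> gromov_prod w (x i) (z j)" if "N \<le> i" "N \<le> j" for i j
  proof -
    have "M + \<delta> \<le> gromov_prod w (x i) (y N)" "M + \<delta> \<le> gromov_prod w (y N) (z j)"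
      using N1 N2 that unfolding N_def by auto
    then show ?thesis using four_point[OF hyp, of w "x i" "y N" "z j"] by linarith
  qed
  then show "\<exists>N. \<forall>i\<ge>N. \<forall>j\<ge>N. M \<le> gromov_prod w (x i) (z j)" by blast
qed

lemma same_end_conv_inf:
  assumes hyp: "delta_hyperbolic TYPE('a::metric_space) \<delta>" and "same_end w x (y :: nat \<Rightarrow> 'a)"
  shows "conv_inf w x"
  unfolding conv_inf_iff_same_end using same_end_trans[OF hyp assms(2) same_end_sym[OF assms(2)]] .

lemma seq_equiv_iff_same_end:
  assumes hyp: "delta_hyperbolic TYPE('a::metric_space) \<delta>"
  shows "seq_equiv w x (y :: nat \<Rightarrow> 'a) \<longleftrightarrow> same_end w x y"
proof -
  have "seq_equiv w x y \<longleftrightarrow> conv_inf w x \<and> conv_inf w y \<and> same_end w x y"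
    unfolding seq_equiv_def same_end_def ..
  then show ?thesis using same_end_conv_inf[OF hyp] same_end_sym by metis
qed

lemma mem_bdry_pt_iff:
  assumes hyp: "delta_hyperbolic TYPE('a::metric_space) \<delta>"
  shows "y \<in> bdry_pt w x \<longleftrightarrow> same_end w x (y :: nat \<Rightarrow> 'a)"
  unfolding bdry_pt_def seq_equiv_iff_same_end[OF hyp] by simp

lemma bdry_pt_eq:
  assumes hyp: "delta_hyperbolic TYPE('a::metric_space) \<delta>" and xy: "same_end w x (y :: nat \<Rightarrow> 'a)"
  shows "bdry_pt w x = bdry_pt w y"
proof -
  have "same_end w x z \<longleftrightarrow> same_end w y z" for z
    using same_end_trans[OF hyp xy] same_end_trans[OF hyp same_end_sym[OF xy]] by blast
  then show ?thesis unfolding set_eq_iff mem_bdry_pt_iff[OF hyp] by blast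
qed

lemma same_end_if_bdry_pt_eq:
  assumes hyp: "delta_hyperbolic TYPE('a::metric_space) \<delta>"
    and "conv_inf w x" and "bdry_pt w x = bdry_pt w (y :: nat \<Rightarrow> 'a)"
  shows "same_end w x y"
proof -
  have "x \<in> bdry_pt w y"
    using assms(2,3) mem_bdry_pt_iff[OF hyp, of x w x] unfolding conv_inf_iff_same_end by simp
  then show ?thesis using mem_bdry_pt_iff[OF hyp] same_end_sym by blast
qed

lemma bilipschitz_seq_conv_inf:
  fixes b :: "int \<Rightarrow> 'a::metric_space"
  assumes hyp: "delta_hyperbolic TYPE('a) \<delta>" and bl: "bilipschitz_seq ell L b" and dl: "4*\<delta> \<le> ell"
    and "0 < ell"
  shows "conv_inf w (\<lambda>n. b (int n))"
proof -
  have "same_end (b 0) (\<lambda>n. b (int n)) (\<lambda>n. b (int n))"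
    unfolding same_end_def
  proof
    fix M
    obtain N :: nat where N: "2 * (M + L + 2*\<delta>) / ell < real N" using reals_Archimedean2 by blast
    have "M \<le> gromov_prod (b 0) (b (int i)) (b (int j))" if "N \<le> i" "N \<le> j" for i j
    proof (rule ccontr)
      assume "\<not> ?thesis"
      then have "gromov_prod (b 0) (b (int (min i j))) (b (int (max i j))) \<le> M"
        by (cases "i \<le> j") (auto simp: gromov_prod_commute max_def min_def)
      moreover have "int (min i j) \<le> int (max i j)" by simp
      ultimately obtain k where k: "int (min i j) \<le> k" "dist (b 0) (b k) \<le> 2 * (M + L + 2*\<delta>)"
        using bilipschitz_seq_near_small_gromov_prod[OF hyp bl dl] by blast
      have "ell * real N \<le> ell * \<bar>real_of_int (0 - k)\<bar>"
        using k(1) that \<open>0 < ell\<close> by simp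
      also have "\<dots> \<le> 2 * (M + L + 2*\<delta>)" using bilipschitz_seq_lower[OF bl, of 0 k] k(2) by simp
      finally show False using N \<open>0 < ell\<close> by (simp add: field_simps)
    qed
    then show "\<exists>N. \<forall>i\<ge>N. \<forall>j\<ge>N. M \<le> gromov_prod (b 0) (b (int i)) (b (int j))" by blast
  qed
  then show ?thesis unfolding conv_inf_iff_same_end by (rule same_end_basepoint)
qed

text \<open>Seen from a point of the line, its two ends have Gromov product 0, while far out each end is
  close to the corresponding end of the sequence; the four point condition then bounds the
  Gromov product of two far terms of the sequence, and the Morse property applies.\<close>
lemma geodesic_line_near_bilipschitz_seq:
  fixes b :: "int \<Rightarrow> 'a::metric_space"
  assumes hyp: "delta_hyperbolic TYPE('a) \<delta>" and bl: "bilipschitz_seq ell L b" and dl: "4*\<delta> \<le> ell"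
    and \<gamma>: "geodesic_line \<gamma>"
    and pos: "same_end w (\<lambda>n. \<gamma> (real n)) (\<lambda>n. b (int n))"
    and neg: "same_end w (\<lambda>n. \<gamma> (- real n)) (\<lambda>n. b (- int n))"
  shows "\<exists>i. dist (\<gamma> s) (b i) \<le> 2 * (L + 4*\<delta>)"
proof -
  define M where "M = dist w (\<gamma> s) + 2*\<delta> + 1"
  obtain N1 where N1: "\<forall>i\<ge>N1. \<forall>j\<ge>N1. M \<le> gromov_prod w (\<gamma> (real i)) (b (int j))"
    using pos unfolding same_end_def by blast
  obtain N2 where N2: "\<forall>i\<ge>N2. \<forall>j\<ge>N2. M \<le> gromov_prod w (\<gamma> (- real i)) (b (- int j))"
    using neg unfolding same_end_def by blast
  obtain N3 :: nat where N3: "\<bar>s\<bar> \<le> real N3" using real_arch_simple by blast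
  define n where "n = max N1 (max N2 N3)"
  have n: "N1 \<le> n" "N2 \<le> n" "\<bar>s\<bar> \<le> real n" using N3 unfolding n_def by auto
  have "dist (\<gamma> (- real n)) (\<gamma> s) + dist (\<gamma> s) (\<gamma> (real n)) = dist (\<gamma> (- real n)) (\<gamma> (real n))"
    using \<gamma> n(3) unfolding geodesic_line_def by auto
  then have "gromov_prod (\<gamma> s) (\<gamma> (- real n)) (\<gamma> (real n)) = 0" by (rule gromov_prod_eq_0_if_between)
  moreover have "M \<le> gromov_prod w (\<gamma> (- real n)) (b (- int n))" using N2 n(2) by blast
  then have "2*\<delta> + 1 \<le> gromov_prod (\<gamma> s) (\<gamma> (- real n)) (b (- int n))"
    using gromov_prod_lipschitz_base[of w "\<gamma> (- real n)" "b (- int n)" "\<gamma> s"] unfolding M_def by linarith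
  moreover have "M \<le> gromov_prod w (\<gamma> (real n)) (b (int n))" using N1 n(1) by blast
  then have "2*\<delta> + 1 \<le> gromov_prod (\<gamma> s) (b (int n)) (\<gamma> (real n))"
    using gromov_prod_lipschitz_base[of w "\<gamma> (real n)" "b (int n)" "\<gamma> s"]
      gromov_prod_commute[of "\<gamma> s" "b (int n)" "\<gamma> (real n)"] unfolding M_def by linarith
  ultimately have "gromov_prod (\<gamma> s) (b (- int n)) (b (int n)) \<le> 2*\<delta>"
    using four_point_twice[OF hyp, of "\<gamma> s" "\<gamma> (- real n)" "b (- int n)" "b (int n)" "\<gamma> (real n)"]
    by linarith
  from bilipschitz_seq_near_small_gromov_prod[OF hyp bl dl _ this] show ?thesis
    by (auto simp: algebra_simps)
qed

section \<open>Geodesic lines with the ends of a bi-Lipschitz sequence\<close>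

lemma pointwise_convergent_subseq:
  fixes f :: "nat \<Rightarrow> 'b \<Rightarrow> 'a::heine_borel" and r :: "nat \<Rightarrow> 'b"
  assumes bounded: "\<And>m. bounded (range (\<lambda>n. f n (r m)))"
  obtains \<sigma> where "strict_mono \<sigma>" "\<And>m. convergent (\<lambda>k. f (\<sigma> k) (r m))"
proof -
  let ?P = "\<lambda>m s. convergent (\<lambda>k. f (s k) (r m))"
  interpret nat: subseqs ?P
  proof (unfold subseqs_def, intro allI impI)
    fix m :: nat and s :: "nat \<Rightarrow> nat"
    have "bounded (range (\<lambda>k. f (s k) (r m)))"
      by (rule bounded_subset[OF bounded[of m]]) auto
    then obtain l s' where "strict_mono s'" "((\<lambda>k. f (s k) (r m)) \<circ> s') \<longlonglongrightarrow> l"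
      using bounded_imp_convergent_subsequence by blast
    then show "\<exists>s'. strict_mono s' \<and> convergent (\<lambda>k. f ((s \<circ> s') k) (r m))"
      by (auto simp: convergent_def o_def)
  qed
  have "?P m nat.diagseq" for m
  proof -
    have reindex: "(\<lambda>k. f ((nat.seqseq (Suc m) \<circ> (\<lambda>k. nat.fold_reduce (Suc m) k (Suc m + k))) k) (r m))
        = (\<lambda>k. f (nat.seqseq (Suc m) k) (r m)) \<circ> (\<lambda>k. nat.fold_reduce (Suc m) k (Suc m + k))"
      by auto
    have "?P m (nat.diagseq \<circ> ((+) (Suc m)))"
      unfolding nat.diagseq_seqseq reindex
      by (intro convergent_subseq_convergent nat.seqseq_holds nat.subseq_diagonal_rest)
    then obtain l where "(\<lambda>k. f (nat.diagseq (k + Suc m)) (r m)) \<longlonglongrightarrow> l"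
      by (auto simp: add.commute dest: convergentD)
    then have "(\<lambda>k. f (nat.diagseq k) (r m)) \<longlonglongrightarrow> l" by (rule LIMSEQ_offset)
    then show ?thesis unfolding convergent_def by blast
  qed
  then show thesis using that nat.subseq_diagseq by blast
qed

lemma lipschitz_maps_convergent_subseq:
  fixes f :: "nat \<Rightarrow> real \<Rightarrow> 'a::heine_borel"
  assumes lip: "\<And>n s t. dist (f n s) (f n t) \<le> \<bar>s - t\<bar>" and bnd: "\<And>n. dist (f n 0) a \<le> B"
  obtains \<sigma> where "strict_mono \<sigma>" "\<And>t. convergent (\<lambda>k. f (\<sigma> k) t)"
proof -
  define r :: "nat \<Rightarrow> real" where "r = from_nat_into \<rat>"
  have r: "range r = \<rat>"
    unfolding r_def using countable_rat Rats_0 by (intro range_from_nat_into) auto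
  have "bounded (range (\<lambda>n. f n (r m)))" for m
  proof (rule bounded_subset[OF bounded_cball[of a "\<bar>r m\<bar> + B"]], clarify)
    fix n show "f n (r m) \<in> cball a (\<bar>r m\<bar> + B)"
      using lip[of n "r m" 0] bnd[of n] dist_triangle[of a "f n (r m)" "f n 0"]
      by (simp add: dist_commute)
  qed
  then obtain \<sigma> where \<sigma>: "strict_mono \<sigma>" "\<And>m. convergent (\<lambda>k. f (\<sigma> k) (r m))"
    using pointwise_convergent_subseq by blast
  have "Cauchy (\<lambda>k. f (\<sigma> k) t)" for t
    unfolding Cauchy_def
  proof (intro allI impI)
    fix e :: real assume "0 < e"
    obtain q where "q \<in> \<rat>" "t - e/3 < q" "q < t + e/3"
      using Rats_dense_in_real[of "t - e/3" "t + e/3"] \<open>0 < e\<close> by auto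
    then have q: "q \<in> \<rat>" "\<bar>t - q\<bar> < e/3" unfolding abs_less_iff by auto
    then obtain m where "q = r m" using r by blast
    moreover have "Cauchy (\<lambda>k. f (\<sigma> k) (r m))" using \<sigma>(2) by (rule convergent_Cauchy)
    ultimately obtain M where M: "\<And>k k'. M \<le> k \<Longrightarrow> M \<le> k' \<Longrightarrow> dist (f (\<sigma> k) q) (f (\<sigma> k') q) < e/3"
      using \<open>0 < e\<close> unfolding Cauchy_def by (meson divide_pos_pos zero_less_numeral)
    have "dist (f (\<sigma> k) t) (f (\<sigma> k') t) < e" if "M \<le> k" "M \<le> k'" for k k'
    proof -
      have "dist (f (\<sigma> k) t) (f (\<sigma> k') t) \<le> dist (f (\<sigma> k) t) (f (\<sigma> k) q) + dist (f (\<sigma> k) q) (f (\<sigma> k') t)"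
        by (rule dist_triangle)
      also have "\<dots> \<le> dist (f (\<sigma> k) t) (f (\<sigma> k) q) + (dist (f (\<sigma> k) q) (f (\<sigma> k') q) + dist (f (\<sigma> k') q) (f (\<sigma> k') t))"
        using dist_triangle by (rule add_left_mono)
      finally show ?thesis
        using M[OF that] lip[of "\<sigma> k" t q] lip[of "\<sigma> k'" q t] q(2) by (simp add: abs_minus_commute)
    qed
    then show "\<exists>M. \<forall>k\<ge>M. \<forall>k'\<ge>M. dist (f (\<sigma> k) t) (f (\<sigma> k') t) < e" by blast
  qed
  then show thesis using that \<sigma>(1) Cauchy_convergent by blast
qed

lemma limit_geodesic_line:
  fixes g :: "nat \<Rightarrow> real \<Rightarrow> 'a::heine_borel"
  assumes lip: "\<And>n s t. dist (g n s) (g n t) \<le> \<bar>s - t\<bar>" and bnd: "\<And>n. dist (g n 0) a \<le> B"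
    and iso: "\<And>n s t. \<bar>s\<bar> \<le> R n \<Longrightarrow> \<bar>t\<bar> \<le> R n \<Longrightarrow> dist (g n s) (g n t) = \<bar>s - t\<bar>"
    and R: "filterlim R at_top sequentially"
  obtains \<gamma> \<sigma> where "geodesic_line \<gamma>" "strict_mono \<sigma>" "\<And>t. (\<lambda>k. g (\<sigma> k) t) \<longlonglongrightarrow> \<gamma> t"
proof -
  obtain \<sigma> where \<sigma>: "strict_mono \<sigma>" "\<And>t. convergent (\<lambda>k. g (\<sigma> k) t)"
    using lipschitz_maps_convergent_subseq[of g a B, OF lip bnd] by blast
  define \<gamma> where "\<gamma> t = lim (\<lambda>k. g (\<sigma> k) t)" for t
  have lim: "(\<lambda>k. g (\<sigma> k) t) \<longlonglongrightarrow> \<gamma> t" for t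
    unfolding \<gamma>_def using \<sigma>(2) convergent_LIMSEQ_iff by blast
  have geodesic: "geodesic_line \<gamma>"
    unfolding geodesic_line_def
  proof (intro allI)
    fix s t
    show "dist (\<gamma> s) (\<gamma> t) = \<bar>s - t\<bar>"
    proof (rule LIMSEQ_unique)
      show "(\<lambda>k. dist (g (\<sigma> k) s) (g (\<sigma> k) t)) \<longlonglongrightarrow> dist (\<gamma> s) (\<gamma> t)"
        by (intro tendsto_dist lim)
      obtain N where N: "\<And>k. N \<le> k \<Longrightarrow> max \<bar>s\<bar> \<bar>t\<bar> \<le> R (\<sigma> k)"
        using filterlim_compose[OF R filterlim_subseq[OF \<sigma>(1)]]
        unfolding filterlim_at_top eventually_sequentially by blast
      have "\<bar>s - t\<bar> = dist (g (\<sigma> k) s) (g (\<sigma> k) t)" if "N \<le> k" for k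
        using iso[of s "\<sigma> k" t] N[OF that] by simp
      then have "\<forall>\<^sub>F k in sequentially. \<bar>s - t\<bar> = dist (g (\<sigma> k) s) (g (\<sigma> k) t)"
        unfolding eventually_sequentially by blast
      then show "(\<lambda>k. dist (g (\<sigma> k) s) (g (\<sigma> k) t)) \<longlonglongrightarrow> \<bar>s - t\<bar>"
        by (rule Lim_transform_eventually[OF tendsto_const])
    qed
  qed
  show thesis by (rule that[OF geodesic \<sigma>(1) lim])
qed

definition geodesic_segment :: "(real \<Rightarrow> 'a::metric_space) \<Rightarrow> 'a \<Rightarrow> 'a \<Rightarrow> bool" where
  "geodesic_segment c x y \<longleftrightarrow> c 0 = x \<and> c (dist x y) = y \<and>
     (\<forall>s\<in>{0..dist x y}. \<forall>t\<in>{0..dist x y}. dist (c s) (c t) = \<bar>s - t\<bar>)"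

lemma geodesic_segment_exists:
  "geodesic_space TYPE('a::metric_space) \<Longrightarrow> \<exists>c. geodesic_segment c x (y::'a)"
  unfolding geodesic_space_def geodesic_segment_def by blast

lemma geodesic_segment_dist:
  "geodesic_segment c x y \<Longrightarrow> s \<in> {0..dist x y} \<Longrightarrow> t \<in> {0..dist x y} \<Longrightarrow> dist (c s) (c t) = \<bar>s - t\<bar>"
  unfolding geodesic_segment_def by blast

lemma geodesic_segment_dist_start:
  assumes "geodesic_segment c x y" "s \<in> {0..dist x y}"
  shows "dist x (c s) = s"
  using geodesic_segment_dist[OF assms(1) _ assms(2), of 0] assms unfolding geodesic_segment_def by simp

lemma geodesic_segment_dist_end:
  assumes "geodesic_segment c x y" "s \<in> {0..dist x y}"
  shows "dist (c s) y = dist x y - s"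
  using geodesic_segment_dist[OF assms(1) assms(2), of "dist x y"] assms unfolding geodesic_segment_def by simp

lemma geodesic_segment_between:
  assumes "geodesic_segment c x y" "s \<in> {0..dist x y}"
  shows "dist x (c s) + dist (c s) y = dist x y"
  using geodesic_segment_dist_start[OF assms] geodesic_segment_dist_end[OF assms] by simp

lemma geodesic_segment_near_bilipschitz_seq:
  fixes b :: "int \<Rightarrow> 'a::metric_space"
  assumes hyp: "delta_hyperbolic TYPE('a) \<delta>" and bl: "bilipschitz_seq ell L b" and dl: "4*\<delta> \<le> ell"
    and seg: "geodesic_segment c (b j) (b j')" and "j \<le> j'" and s: "s \<in> {0..dist (b j) (b j')}"
  shows "\<exists>i. j \<le> i \<and> i \<le> j' \<and> dist (c s) (b i) \<le> 2 * (L + 2*\<delta>)"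
  using between_near_bilipschitz_seq[OF hyp bl dl geodesic_segment_between[OF seg s] \<open>j \<le> j'\<close>, of 0]
  by simp

lemma ex_switch_nat:
  fixes P Q :: "nat \<Rightarrow> bool"
  assumes "\<And>k. P k \<or> Q k" and "Q 0" and "P n"
  shows "\<exists>k. P k \<and> Q (k - 1)"
proof -
  define k where "k = (LEAST k. P k)"
  have "P k" unfolding k_def using \<open>P n\<close> by (rule LeastI)
  moreover have "Q (k - 1)"
  proof (cases k)
    case (Suc k')
    then have "\<not> P k'" unfolding k_def by (metis lessI not_less_Least)
    then show ?thesis using assms(1) Suc by auto
  qed (use \<open>Q 0\<close> in simp)
  ultimately show ?thesis by blast
qed

text \<open>Walking along the segment in unit steps, the nearby terms of the sequence switch from
  negative to nonnegative indices; at the switch both kinds are close, so by the lower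
  bi-Lipschitz bound the nonnegative index is small.\<close>
lemma geodesic_segment_passes_near_bilipschitz_seq:
  fixes b :: "int \<Rightarrow> 'a::metric_space"
  assumes hyp: "delta_hyperbolic TYPE('a) \<delta>" and bl: "bilipschitz_seq ell L b" and dl: "4*\<delta> \<le> ell"
    and "0 < ell" and seg: "geodesic_segment c (b j) (b j')" and "j \<le> 0" "0 \<le> j'"
  shows "\<exists>s\<in>{0..dist (b j) (b j')}. dist (c s) (b 0) \<le> 2*(L + 2*\<delta>) + L * (4*(L + 2*\<delta>) + 1) / ell"
proof -
  define D where "D = 2*(L + 2*\<delta>)"
  define d where "d = dist (b j) (b j')"
  define sg where "sg k = min (real k) d" for k :: nat
  have sg: "sg k \<in> {0..d}" for k unfolding sg_def d_def by auto
  have "0 \<le> D"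
    unfolding D_def using delta_hyperbolic_nonneg[OF hyp] bilipschitz_seq_upper_nonneg[OF bl] by simp
  define pos where "pos k \<longleftrightarrow> (\<exists>i\<ge>0. dist (c (sg k)) (b i) \<le> D)" for k
  define neg where "neg k \<longleftrightarrow> (\<exists>i\<le>0. dist (c (sg k)) (b i) \<le> D)" for k
  have "sg (nat \<lceil>d\<rceil>) = d" unfolding sg_def using real_nat_ceiling_ge[of d] by (rule min_absorb2)
  then have "pos (nat \<lceil>d\<rceil>)"
    using seg \<open>0 \<le> j'\<close> \<open>0 \<le> D\<close> unfolding pos_def geodesic_segment_def d_def by auto
  moreover have "neg 0"
    using seg \<open>j \<le> 0\<close> \<open>0 \<le> D\<close> unfolding neg_def geodesic_segment_def sg_def d_def by auto
  moreover have "pos k \<or> neg k" for k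
  proof -
    obtain i where "dist (c (sg k)) (b i) \<le> D"
      using geodesic_segment_near_bilipschitz_seq[OF hyp bl dl seg _ sg[of k, unfolded d_def]] \<open>j \<le> 0\<close> \<open>0 \<le> j'\<close>
      unfolding D_def by fastforce
    then show ?thesis unfolding pos_def neg_def by (cases "0 \<le> i") auto
  qed
  ultimately obtain k where "pos k" "neg (k - 1)" using ex_switch_nat[of pos neg] by blast
  then obtain i i' where i: "0 \<le> i" "dist (c (sg k)) (b i) \<le> D"
    and i': "i' \<le> 0" "dist (c (sg (k - 1))) (b i') \<le> D" unfolding pos_def neg_def by blast
  have "dist (c (sg k)) (c (sg (k - 1))) = \<bar>sg k - sg (k - 1)\<bar>"
    using geodesic_segment_dist[OF seg] sg unfolding d_def by blast
  also have "\<dots> \<le> 1" unfolding sg_def by (cases k) (auto simp: min_def)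
  finally have "dist (c (sg k)) (b i') \<le> D + 1" using i'(2) dist_triangle[of "c (sg k)" "b i'" "c (sg (k - 1))"] by linarith
  have "ell * real_of_int i \<le> ell * \<bar>real_of_int (i - i')\<bar>"
    using i(1) i'(1) \<open>0 < ell\<close> by simp
  also have "\<dots> \<le> dist (b i) (b i')" by (rule bilipschitz_seq_lower[OF bl])
  also have "\<dots> \<le> 2 * D + 1"
    using i(2) \<open>dist (c (sg k)) (b i') \<le> D + 1\<close> dist_triangle[of "b i" "b i'" "c (sg k)"]
    by (simp add: dist_commute)
  finally have "real_of_int i \<le> (2 * D + 1) / ell" using \<open>0 < ell\<close> by (simp add: field_simps)
  then have "dist (b i) (b 0) \<le> L * ((2 * D + 1) / ell)"
    using bilipschitz_seq_upper[OF bl, of i 0] i(1) mult_left_mono[of _ _ L]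
      bilipschitz_seq_upper_nonneg[OF bl] by fastforce
  then have "dist (c (sg k)) (b 0) \<le> D + L * (2 * D + 1) / ell"
    using i(2) dist_triangle[of "c (sg k)" "b 0" "b i"] by simp
  then show ?thesis using sg unfolding D_def d_def by (auto simp: algebra_simps)
qed

lemma geodesic_segment_sides_near_bilipschitz_seq:
  fixes b :: "int \<Rightarrow> 'a::metric_space"
  assumes hyp: "delta_hyperbolic TYPE('a) \<delta>" and bl: "bilipschitz_seq ell L b" and dl: "4*\<delta> \<le> ell"
    and seg: "geodesic_segment c (b j) (b j')" and "j \<le> i" "i \<le> j'"
    and s0: "s0 \<in> {0..dist (b j) (b j')}" and near: "dist (c s0) (b i) \<le> A"
    and s: "s \<in> {0..dist (b j) (b j')}"
  shows "s0 \<le> s \<Longrightarrow> \<exists>k. i \<le> k \<and> k \<le> j' \<and> dist (c s) (b k) \<le> 2 * (2*A + L + 2*\<delta>)"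
    and "s \<le> s0 \<Longrightarrow> \<exists>k. j \<le> k \<and> k \<le> i \<and> dist (c s) (b k) \<le> 2 * (2*A + L + 2*\<delta>)"
proof -
  have "0 \<le> A" using near zero_le_dist[of "c s0" "b i"] by linarith
  have d: "dist (c s0) (c s) = \<bar>s0 - s\<bar>" using geodesic_segment_dist[OF seg s0 s] .
  show "\<exists>k. i \<le> k \<and> k \<le> j' \<and> dist (c s) (b k) \<le> 2 * (2*A + L + 2*\<delta>)" if "s0 \<le> s"
  proof (rule between_near_bilipschitz_seq[OF hyp bl dl _ \<open>i \<le> j'\<close> near])
    show "dist (c s0) (c s) + dist (c s) (b j') = dist (c s0) (b j')"
      using d that geodesic_segment_dist_end[OF seg s] geodesic_segment_dist_end[OF seg s0] by simp
  qed (simp add: \<open>0 \<le> A\<close>)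
  show "\<exists>k. j \<le> k \<and> k \<le> i \<and> dist (c s) (b k) \<le> 2 * (2*A + L + 2*\<delta>)" if "s \<le> s0"
  proof (rule between_near_bilipschitz_seq[OF hyp bl dl _ \<open>j \<le> i\<close> _ near])
    show "dist (b j) (c s) + dist (c s) (c s0) = dist (b j) (c s0)"
      using d that geodesic_segment_dist_start[OF seg s] geodesic_segment_dist_start[OF seg s0]
      by (simp add: dist_commute)
  qed (simp add: \<open>0 \<le> A\<close>)
qed

lemma geodesic_segment_clamped_lipschitz:
  assumes seg: "geodesic_segment c x y"
  shows "dist (c (max 0 (min (dist x y) (a + s)))) (c (max 0 (min (dist x y) (a + t)))) \<le> \<bar>s - t\<bar>"
proof -
  have "max 0 (min (dist x y) (a + r)) \<in> {0..dist x y}" for r by auto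
  then show ?thesis using geodesic_segment_dist[OF seg] by (auto simp: min_def max_def)
qed

lemma bilipschitz_seq_centred_segments:
  fixes b :: "int \<Rightarrow> 'a::metric_space"
  assumes geod: "geodesic_space TYPE('a)" and hyp: "delta_hyperbolic TYPE('a) \<delta>"
    and bl: "bilipschitz_seq ell L b" and dl: "4*\<delta> \<le> ell" and "0 < ell"
  obtains A c s where "0 \<le> A"
    "\<And>n. geodesic_segment (c n) (b (- int n)) (b (int n))"
    "\<And>n. s n \<in> {0..dist (b (- int n)) (b (int n))}"
    "\<And>n. dist (c n (s n)) (b 0) \<le> A"
    "\<And>n. ell * real n - A \<le> s n"
    "\<And>n. ell * real n - A \<le> dist (b (- int n)) (b (int n)) - s n"
proof -
  define A where "A = 2*(L + 2*\<delta>) + L * (4*(L + 2*\<delta>) + 1) / ell"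
  have "0 \<le> A"
    unfolding A_def using delta_hyperbolic_nonneg[OF hyp] bilipschitz_seq_upper_nonneg[OF bl] \<open>0 < ell\<close>
    by simp
  have "\<forall>n. \<exists>c. geodesic_segment c (b (- int n)) (b (int n))"
    using geodesic_segment_exists[OF geod] by blast
  then obtain c where c: "\<And>n. geodesic_segment (c n) (b (- int n)) (b (int n))" by metis
  have "\<exists>s\<in>{0..dist (b (- int n)) (b (int n))}. dist (c n s) (b 0) \<le> A" for n
    unfolding A_def by (rule geodesic_segment_passes_near_bilipschitz_seq[OF hyp bl dl \<open>0 < ell\<close> c]) simp_all
  then obtain s where s: "\<And>n. s n \<in> {0..dist (b (- int n)) (b (int n))}" "\<And>n. dist (c n (s n)) (b 0) \<le> A"
    by metis
  have room: "ell * real n - A \<le> s n \<and> ell * real n - A \<le> dist (b (- int n)) (b (int n)) - s n" for n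
  proof -
    have "ell * real n \<le> dist (b (- int n)) (b 0)" "ell * real n \<le> dist (b 0) (b (int n))"
      using bilipschitz_seq_lower[OF bl, of "- int n" 0] bilipschitz_seq_lower[OF bl, of 0 "int n"] by simp_all
    moreover have "dist (b (- int n)) (c n (s n)) = s n"
      "dist (c n (s n)) (b (int n)) = dist (b (- int n)) (b (int n)) - s n"
      using geodesic_segment_dist_start[OF c s(1)] geodesic_segment_dist_end[OF c s(1)] by auto
    ultimately show ?thesis
      using s(2)[of n] dist_triangle[of "b (- int n)" "b 0" "c n (s n)"]
        dist_triangle[of "b 0" "b (int n)" "c n (s n)"] dist_commute[of "b 0" "c n (s n)"] by linarith
  qed
  show thesis by (rule that[OF \<open>0 \<le> A\<close> c s]) (use room in auto)
qed

text \<open>Each map is a centred segment, extended by constants beyond its endpoints.\<close>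
lemma bilipschitz_seq_approximating_geodesics:
  fixes b :: "int \<Rightarrow> 'a::metric_space"
  assumes geod: "geodesic_space TYPE('a)" and hyp: "delta_hyperbolic TYPE('a) \<delta>"
    and bl: "bilipschitz_seq ell L b" and dl: "4*\<delta> \<le> ell" and "0 < ell"
  obtains g :: "nat \<Rightarrow> real \<Rightarrow> 'a" and D where
    "\<And>n s t. dist (g n s) (g n t) \<le> \<bar>s - t\<bar>"
    "\<And>n. dist (g n 0) (b 0) \<le> D"
    "\<And>n s t. \<bar>s\<bar> \<le> ell * real n - D \<Longrightarrow> \<bar>t\<bar> \<le> ell * real n - D \<Longrightarrow> dist (g n s) (g n t) = \<bar>s - t\<bar>"
    "\<And>n t. 0 \<le> t \<Longrightarrow> t \<le> ell * real n - D \<Longrightarrow> \<exists>i\<ge>0. dist (g n t) (b i) \<le> D"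
    "\<And>n t. t \<le> 0 \<Longrightarrow> - t \<le> ell * real n - D \<Longrightarrow> \<exists>i\<le>0. dist (g n t) (b i) \<le> D"
proof -
  obtain A c s where "0 \<le> A"
    and c: "\<And>n. geodesic_segment (c n) (b (- int n)) (b (int n))"
    and s: "\<And>n. s n \<in> {0..dist (b (- int n)) (b (int n))}" "\<And>n. dist (c n (s n)) (b 0) \<le> A"
    and room: "\<And>n. ell * real n - A \<le> s n" "\<And>n. ell * real n - A \<le> dist (b (- int n)) (b (int n)) - s n"
    using bilipschitz_seq_centred_segments[OF geod hyp bl dl \<open>0 < ell\<close>] by blast
  define D where "D = 2 * (2*A + L + 2*\<delta>)"
  have "A \<le> D" unfolding D_def using \<open>0 \<le> A\<close> delta_hyperbolic_nonneg[OF hyp] bilipschitz_seq_upper_nonneg[OF bl]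
    by simp
  define clamp where "clamp n t = max 0 (min (dist (b (- int n)) (b (int n))) (s n + t))" for n t
  have clamp_in: "clamp n t \<in> {0..dist (b (- int n)) (b (int n))}" for n t unfolding clamp_def by auto
  have clamp_id: "clamp n t = s n + t" if "\<bar>t\<bar> \<le> ell * real n - D" for n t
    using that room[of n] \<open>A \<le> D\<close> unfolding clamp_def by auto
  define g where "g n t = c n (clamp n t)" for n t
  show thesis
  proof (rule that[of g D])
    show "dist (g n s') (g n t) \<le> \<bar>s' - t\<bar>" for n s' t
      unfolding g_def clamp_def by (rule geodesic_segment_clamped_lipschitz[OF c])
    show "dist (g n 0) (b 0) \<le> D" for n
      using s[of n] \<open>A \<le> D\<close> unfolding g_def clamp_def by simp
    show "dist (g n s') (g n t) = \<bar>s' - t\<bar>" if "\<bar>s'\<bar> \<le> ell * real n - D" "\<bar>t\<bar> \<le> ell * real n - D" for n s' t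
    proof -
      have "dist (g n s') (g n t) = \<bar>clamp n s' - clamp n t\<bar>"
        unfolding g_def by (rule geodesic_segment_dist[OF c clamp_in clamp_in])
      then show ?thesis using clamp_id[OF that(1)] clamp_id[OF that(2)] by simp
    qed
    show "\<exists>i\<ge>0. dist (g n t) (b i) \<le> D" if "0 \<le> t" "t \<le> ell * real n - D" for n t
    proof -
      have "s n \<le> clamp n t" using clamp_id[of t n] that by simp
      from geodesic_segment_sides_near_bilipschitz_seq(1)[OF hyp bl dl c _ _ s clamp_in this]
      show ?thesis unfolding g_def D_def by fastforce
    qed
    show "\<exists>i\<le>0. dist (g n t) (b i) \<le> D" if "t \<le> 0" "- t \<le> ell * real n - D" for n t
    proof -
      have "clamp n t \<le> s n" using clamp_id[of t n] that by simp
      from geodesic_segment_sides_near_bilipschitz_seq(2)[OF hyp bl dl c _ _ s clamp_in this]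
      show ?thesis unfolding g_def D_def by fastforce
    qed
  qed
qed

lemma limit_stays_near:
  assumes "X \<longlonglongrightarrow> z" and "\<forall>\<^sub>F k in sequentially. \<exists>j\<in>S. dist (X k) (b j) \<le> E"
  shows "\<exists>j\<in>S. dist z (b j) \<le> E + 1"
proof -
  have "\<forall>\<^sub>F k in sequentially. dist (X k) z < 1"
    using assms(1) by (rule tendstoD) simp
  with assms(2) have "\<forall>\<^sub>F k in sequentially. \<exists>j\<in>S. dist z (b j) \<le> E + 1"
    by eventually_elim (smt (verit) dist_commute dist_triangle)
  then show ?thesis by simp
qed

lemma exists_geodesic_line_near_bilipschitz_seq:
  fixes b :: "int \<Rightarrow> 'a::heine_borel"
  assumes geod: "geodesic_space TYPE('a)" and hyp: "delta_hyperbolic TYPE('a) \<delta>"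
    and bl: "bilipschitz_seq ell L b" and dl: "4*\<delta> \<le> ell" and "0 < ell"
  obtains \<gamma> E where "geodesic_line \<gamma>"
    "\<And>t. 0 \<le> t \<Longrightarrow> \<exists>j\<ge>0. dist (\<gamma> t) (b j) \<le> E"
    "\<And>t. t \<le> 0 \<Longrightarrow> \<exists>j\<le>0. dist (\<gamma> t) (b j) \<le> E"
proof -
  obtain g :: "nat \<Rightarrow> real \<Rightarrow> 'a" and D where
    lip: "\<And>n s t. dist (g n s) (g n t) \<le> \<bar>s - t\<bar>" and bnd: "\<And>n. dist (g n 0) (b 0) \<le> D"
    and iso: "\<And>n s t. \<bar>s\<bar> \<le> ell * real n - D \<Longrightarrow> \<bar>t\<bar> \<le> ell * real n - D \<Longrightarrow> dist (g n s) (g n t) = \<bar>s - t\<bar>"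
    and pos: "\<And>n t. 0 \<le> t \<Longrightarrow> t \<le> ell * real n - D \<Longrightarrow> \<exists>i\<ge>0. dist (g n t) (b i) \<le> D"
    and neg: "\<And>n t. t \<le> 0 \<Longrightarrow> - t \<le> ell * real n - D \<Longrightarrow> \<exists>i\<le>0. dist (g n t) (b i) \<le> D"
    using bilipschitz_seq_approximating_geodesics[OF geod hyp bl dl \<open>0 < ell\<close>] by metis
  have "filterlim (\<lambda>n. - D + ell * real n) at_top sequentially"
    by (intro filterlim_tendsto_add_at_top[OF tendsto_const] filterlim_tendsto_pos_mult_at_top[OF tendsto_const]
        \<open>0 < ell\<close> filterlim_real_sequentially)
  then have R: "filterlim (\<lambda>n. ell * real n - D) at_top sequentially" by simp
  obtain \<gamma> \<sigma> where \<gamma>: "geodesic_line \<gamma>" and "strict_mono \<sigma>" and lim: "\<And>t. (\<lambda>k. g (\<sigma> k) t) \<longlonglongrightarrow> \<gamma> t"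
    using limit_geodesic_line[of g "b 0" D "\<lambda>n. ell * real n - D", OF lip bnd iso R] by blast
  have large: "\<forall>\<^sub>F k in sequentially. \<bar>t\<bar> \<le> ell * real (\<sigma> k) - D" for t
    using filterlim_compose[OF R filterlim_subseq[OF \<open>strict_mono \<sigma>\<close>]] by (simp add: filterlim_at_top)
  show thesis
  proof (rule that[OF \<gamma>])
    show "\<exists>j\<ge>0. dist (\<gamma> t) (b j) \<le> D + 1" if "0 \<le> t" for t
      using limit_stays_near[OF lim, where S="{0..}" and b=b and E=D] eventually_mono[OF large[of t]] pos that
      by (simp add: Bex_def)
    show "\<exists>j\<le>0. dist (\<gamma> t) (b j) \<le> D + 1" if "t \<le> 0" for t
      using limit_stays_near[OF lim, where S="{..0}" and b=b and E=D] eventually_mono[OF large[of t]] neg that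
      by (simp add: Bex_def)
  qed
qed

lemma same_end_geodesic_ray_near_bilipschitz_seq:
  fixes b :: "int \<Rightarrow> 'a::metric_space"
  assumes hyp: "delta_hyperbolic TYPE('a) \<delta>" and bl: "bilipschitz_seq ell L b" and dl: "4*\<delta> \<le> ell"
    and "0 < ell" and \<gamma>: "geodesic_line \<gamma>"
    and near: "\<And>t. 0 \<le> t \<Longrightarrow> \<exists>j\<ge>0. dist (\<gamma> t) (b j) \<le> E"
  shows "same_end w (\<lambda>n. b (int n)) (\<lambda>n. \<gamma> (real n))"
proof -
  have "\<forall>m::nat. \<exists>i\<ge>0. dist (\<gamma> (real m)) (b i) \<le> E" using near by simp
  then obtain j where j: "\<And>m. 0 \<le> j m" "\<And>m. dist (\<gamma> (real m)) (b (j m)) \<le> E" by metis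
  have "0 < L"
    using bilipschitz_seq_lower[OF bl, of 0 1] bilipschitz_seq_upper[OF bl, of 0 1] \<open>0 < ell\<close> by simp
  have grow: "real m - (2*E + L * j 0) \<le> L * j m" for m
  proof -
    have "real m = dist (\<gamma> (real m)) (\<gamma> 0)" using \<gamma> unfolding geodesic_line_def by simp
    also have "\<dots> \<le> dist (\<gamma> (real m)) (b (j m)) + dist (b (j m)) (b (j 0)) + dist (b (j 0)) (\<gamma> 0)"
      using dist_triangle[of "\<gamma> (real m)" "\<gamma> 0" "b (j m)"] dist_triangle[of "b (j m)" "\<gamma> 0" "b (j 0)"] by simp
    also have "\<dots> \<le> E + L * \<bar>real_of_int (j m - j 0)\<bar> + E"
      using j[of m] j[of 0] bilipschitz_seq_upper[OF bl, of "j m" "j 0"] by (simp add: dist_commute)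
    also have "\<dots> \<le> 2*E + L * (j m + j 0)"
      using j[of m] j[of 0] \<open>0 < L\<close> by (simp add: mult_left_mono)
    finally show ?thesis by (simp add: algebra_simps)
  qed
  have "filterlim (\<lambda>m. nat (j m)) at_top sequentially"
    unfolding filterlim_at_top eventually_sequentially
  proof
    fix Z :: nat
    have "Z \<le> nat (j m)" if "L * Z + 2*E + L * j 0 \<le> real m" for m
    proof -
      have "L * real Z \<le> L * real_of_int (j m)" using grow[of m] that by linarith
      then have "real_of_int (int Z) \<le> real_of_int (j m)" using \<open>0 < L\<close> by simp
      then show ?thesis using j(1)[of m] le_nat_iff of_int_le_iff by blast
    qed
    then show "\<exists>N. \<forall>m\<ge>N. Z \<le> nat (j m)"
      by (meson le_nat_iff nat_ceiling_le_eq of_nat_le_iff order_trans real_nat_ceiling_ge)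
  qed
  moreover have "dist (\<gamma> (real m)) (b (int (nat (j m)))) \<le> E" for m using j[of m] by simp
  moreover have "same_end w (\<lambda>n. b (int n)) (\<lambda>n. b (int n))"
    using bilipschitz_seq_conv_inf[OF hyp bl dl \<open>0 < ell\<close>] unfolding conv_inf_iff_same_end .
  ultimately show ?thesis
    using same_end_close[where y="\<lambda>n. b (int n)" and y'="\<lambda>n. \<gamma> (real n)" and \<sigma>="\<lambda>m. nat (j m)"] by blast
qed

lemma exists_geodesic_line_same_ends_bilipschitz_seq:
  fixes b :: "int \<Rightarrow> 'a::heine_borel"
  assumes geod: "geodesic_space TYPE('a)" and hyp: "delta_hyperbolic TYPE('a) \<delta>"
    and bl: "bilipschitz_seq ell L b" and dl: "4*\<delta> \<le> ell" and "0 < ell"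
  obtains \<gamma> where "geodesic_line \<gamma>"
    "same_end w (\<lambda>n. b (int n)) (\<lambda>n. \<gamma> (real n))"
    "same_end w (\<lambda>n. b (- int n)) (\<lambda>n. \<gamma> (- real n))"
proof -
  obtain \<gamma> E where \<gamma>: "geodesic_line \<gamma>"
    and pos: "\<And>t. 0 \<le> t \<Longrightarrow> \<exists>j\<ge>0. dist (\<gamma> t) (b j) \<le> E"
    and neg: "\<And>t. t \<le> 0 \<Longrightarrow> \<exists>j\<le>0. dist (\<gamma> t) (b j) \<le> E"
    using exists_geodesic_line_near_bilipschitz_seq[OF geod hyp bl dl \<open>0 < ell\<close>] by blast
  have "geodesic_line (\<lambda>t. \<gamma> (- t))" using \<gamma> unfolding geodesic_line_def by (simp add: abs_minus_commute)
  moreover have "\<exists>j\<ge>0. dist (\<gamma> (- t)) (b (- j)) \<le> E" if "0 \<le> t" for t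
    using neg[of "- t"] that by (metis minus_minus neg_0_le_iff_le)
  ultimately have "same_end w (\<lambda>n. b (- int n)) (\<lambda>n. \<gamma> (- real n))"
    using same_end_geodesic_ray_near_bilipschitz_seq[OF hyp bilipschitz_seq_reflect[OF bl] dl \<open>0 < ell\<close>]
    by blast
  then show thesis
    using that \<gamma> same_end_geodesic_ray_near_bilipschitz_seq[OF hyp bl dl \<open>0 < ell\<close> \<gamma> pos] by blast
qed

section \<open>Subadditive sequences\<close>

lemma subadditive_mult_add:
  fixes T :: "nat \<Rightarrow> real"
  assumes sub: "\<And>m n. T (m + n) \<le> T m + T n"
  shows "T (q * m + r) \<le> real q * T m + T r"
proof (induction q)
  case 0
  then show ?case by simp
next
  case (Suc q)
  have "T (Suc q * m + r) \<le> T m + T (q * m + r)" using sub[of m "q * m + r"] by (simp add: add.assoc)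
  then show ?case using Suc by (simp add: algebra_simps)
qed

lemma subadditive_quotient_le:
  fixes T :: "nat \<Rightarrow> real"
  assumes sub: "\<And>m n. T (m + n) \<le> T m + T n" and nonneg: "\<And>n. 0 \<le> T n"
    and "1 \<le> m" "1 \<le> n"
  shows "T n / real n \<le> T m / real m + (\<Sum>r<m. T r) / real n"
proof -
  have "T (n mod m) \<le> (\<Sum>r<m. T r)"
    using \<open>1 \<le> m\<close> nonneg by (intro member_le_sum) auto
  then have "T n \<le> real (n div m) * T m + (\<Sum>r<m. T r)"
    using subadditive_mult_add[of T, OF sub, of "n div m" m "n mod m"] by simp
  moreover have "real (n div m) * real m \<le> real n"
    by (metis of_nat_le_iff of_nat_mult div_times_less_eq_dividend)
  then have "real (n div m) \<le> real n / real m" using \<open>1 \<le> m\<close> by (simp add: field_simps)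
  from mult_right_mono[OF this nonneg[of m]]
  have "real (n div m) * T m \<le> real n * (T m / real m)" by simp
  ultimately show ?thesis using \<open>1 \<le> n\<close> by (simp add: field_simps)
qed

lemma fekete_subadditive:
  fixes T :: "nat \<Rightarrow> real"
  assumes sub: "\<And>m n. T (m + n) \<le> T m + T n" and nonneg: "\<And>n. 0 \<le> T n"
  shows "(\<lambda>n. T n / real n) \<longlonglongrightarrow> (INF n\<in>{1..}. T n / real n)"
    and "1 \<le> n \<Longrightarrow> (INF n\<in>{1..}. T n / real n) \<le> T n / real n"
proof -
  define c where "c = (INF n\<in>{1..}. T n / real n)"
  have bdd: "bdd_below ((\<lambda>n. T n / real n) ` {1..})"
    by (rule bdd_belowI[of _ 0]) (use nonneg in auto)
  have lower: "c \<le> T n / real n" if "1 \<le> n" for n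
    unfolding c_def by (rule cInf_lower[OF _ bdd]) (use that in auto)
  then show "1 \<le> n \<Longrightarrow> (INF n\<in>{1..}. T n / real n) \<le> T n / real n" unfolding c_def .
  show "(\<lambda>n. T n / real n) \<longlonglongrightarrow> (INF n\<in>{1..}. T n / real n)"
    unfolding c_def[symmetric]
  proof (rule LIMSEQ_I)
    fix e :: real assume "0 < e"
    then obtain m where "1 \<le> m" and m: "T m / real m < c + e/2"
      using cInf_lessD[of "(\<lambda>n. T n / real n) ` {1..}" "c + e/2"] unfolding c_def by auto
    define B where "B = (\<Sum>r<m. T r)"
    obtain N :: nat where N: "2 * B / e + 1 \<le> real N" using real_arch_simple by blast
    have "norm (T n / real n - c) < e" if "N \<le> n" for n
    proof -
      have "0 \<le> 2 * B / e" unfolding B_def using nonneg \<open>0 < e\<close> by (simp add: sum_nonneg)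
      then have "1 \<le> real n" using N that of_nat_le_iff[of N n] by linarith
      then have "1 \<le> n" by simp
      have "2 * B / e < real n" using N that of_nat_le_iff[of N n] by linarith
      then have "B / real n < e/2" using \<open>0 < e\<close> \<open>1 \<le> real n\<close> by (simp add: field_simps)
      then have "T n / real n - c < e" "0 \<le> T n / real n - c"
        using subadditive_quotient_le[of T, OF sub nonneg \<open>1 \<le> m\<close> \<open>1 \<le> n\<close>] m lower[OF \<open>1 \<le> n\<close>]
        unfolding B_def by linarith+
      then show ?thesis by simp
    qed
    then show "\<exists>N. \<forall>n\<ge>N. norm (T n / real n - c) < e" by blast
  qed
qed

section \<open>Isometric actions\<close>

lemma fix_minus_eq_fix_plus_inv: "fix_minus w Gm phi g = fix_plus w Gm phi (inv\<^bsub>Gm\<^esub> g)"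
  unfolding fix_minus_def fix_plus_def ..

lemma range_subset_Ax:
  assumes "geodesic_line \<gamma>" "conv_inf w (\<lambda>n. \<gamma> (real n))" "conv_inf w (\<lambda>n. \<gamma> (- real n))"
    and "bdry_pt w (\<lambda>n. \<gamma> (real n)) = fix_plus w Gm phi g"
    and "bdry_pt w (\<lambda>n. \<gamma> (- real n)) = fix_minus w Gm phi g"
  shows "range \<gamma> \<subseteq> Ax w Gm phi g"
  using assms unfolding Ax_def by blast

lemma AxE:
  assumes "x \<in> Ax w Gm phi g"
  obtains \<gamma> s where "x = \<gamma> s" "geodesic_line \<gamma>"
    "conv_inf w (\<lambda>n. \<gamma> (real n))" "conv_inf w (\<lambda>n. \<gamma> (- real n))"
    "bdry_pt w (\<lambda>n. \<gamma> (real n)) = fix_plus w Gm phi g"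
    "bdry_pt w (\<lambda>n. \<gamma> (- real n)) = fix_minus w Gm phi g"
proof -
  obtain \<gamma> s where x: "x = \<gamma> s" and \<gamma>: "geodesic_line \<gamma>"
    and conv: "conv_inf w (\<lambda>n. \<gamma> (real n))" "conv_inf w (\<lambda>n. \<gamma> (- real n))"
    and ends: "{bdry_pt w (\<lambda>n. \<gamma> (real n)), bdry_pt w (\<lambda>n. \<gamma> (- real n))}
      = {fix_plus w Gm phi g, fix_minus w Gm phi g}"
    using assms unfolding Ax_def by blast
  from ends consider
      "bdry_pt w (\<lambda>n. \<gamma> (real n)) = fix_plus w Gm phi g"
      "bdry_pt w (\<lambda>n. \<gamma> (- real n)) = fix_minus w Gm phi g"
    | "bdry_pt w (\<lambda>n. \<gamma> (- real n)) = fix_plus w Gm phi g"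
      "bdry_pt w (\<lambda>n. \<gamma> (real n)) = fix_minus w Gm phi g"
    unfolding doubleton_eq_iff by blast
  then show thesis
  proof cases
    case 1
    with x \<gamma> conv show thesis by (rule that)
  next
    case 2
    have "geodesic_line (\<lambda>t. \<gamma> (- t))" using \<gamma> unfolding geodesic_line_def by (simp add: abs_minus_commute)
    with 2 x conv show thesis by (intro that[of "\<lambda>t. \<gamma> (- t)" "- s"]) simp_all
  qed
qed

lemma (in group) conj_int_pow:
  assumes "k \<in> carrier G" "p \<in> carrier G"
  shows "(k \<otimes> p \<otimes> inv k) [^] (i::int) = k \<otimes> p [^] i \<otimes> inv k"
proof -
  have "(\<lambda>x. k \<otimes> x \<otimes> inv k) \<in> hom G G"
    unfolding hom_def using assms by (auto simp: m_assoc inv_solve_left)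
  from hom_int_pow[OF this assms(2) is_group is_group] show ?thesis by simp
qed

lemma (in group) conj_nat_pow:
  "k \<in> carrier G \<Longrightarrow> p \<in> carrier G \<Longrightarrow> (k \<otimes> p \<otimes> inv k) [^] (n::nat) = k \<otimes> p [^] n \<otimes> inv k"
  using conj_int_pow[of k p "int n"] by (simp add: int_pow_int)

lemma (in group) inv_conj: "k \<in> carrier G \<Longrightarrow> p \<in> carrier G \<Longrightarrow> inv (k \<otimes> p \<otimes> inv k) = k \<otimes> inv p \<otimes> inv k"
  by (simp add: inv_mult_group m_assoc)

locale isometric_action =
  fixes Gm :: "('g, 'b) monoid_scheme" (structure)
    and phi :: "'g \<Rightarrow> 'a::metric_space \<Rightarrow> 'a" and bp :: 'a
  assumes action: "isom_action Gm phi"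

sublocale isometric_action \<subseteq> group Gm
  using action unfolding isom_action_def by simp

context isometric_action
begin

lemma phi_dist: "g \<in> carrier Gm \<Longrightarrow> dist (phi g x) (phi g y) = dist x y"
  using action unfolding isom_action_def isometry_def by auto

lemma phi_mult: "g \<in> carrier Gm \<Longrightarrow> h \<in> carrier Gm \<Longrightarrow> phi (g \<otimes> h) x = phi g (phi h x)"
  using action unfolding isom_action_def by auto

lemma phi_one [simp]: "phi \<one> x = x"
  using action unfolding isom_action_def by auto

lemma phi_inv_cancel: "g \<in> carrier Gm \<Longrightarrow> phi (inv g) (phi g x) = x"
  using phi_mult[of "inv g" g x] by simp

lemma phi_cancel_inv: "g \<in> carrier Gm \<Longrightarrow> phi g (phi (inv g) x) = x"
  using phi_mult[of g "inv g" x] by simp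

lemma same_end_phi:
  assumes "g \<in> carrier Gm" and "same_end w x y"
  shows "same_end w' (\<lambda>n. phi g (x n)) (\<lambda>n. phi g (y n))"
proof -
  have "same_end (phi g w) (\<lambda>n. phi g (x n)) (\<lambda>n. phi g (y n))"
    using assms(2) gromov_prod_isometry[of "phi g", OF phi_dist[OF assms(1)]] unfolding same_end_def by simp
  then show ?thesis by (rule same_end_basepoint)
qed

lemma phi_inv_conj_orbit:
  assumes "k \<in> carrier Gm" "p \<in> carrier Gm"
  shows "phi (inv k) (phi ((k \<otimes> p \<otimes> inv k) [^] (n::nat)) bp) = phi (p [^] n) (phi (inv k) bp)"
  using assms by (simp add: conj_nat_pow phi_mult phi_inv_cancel)

definition disp :: "'g \<Rightarrow> nat \<Rightarrow> real" where
  "disp g n = dist bp (phi (g [^] n) bp)"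

lemma disp_nonneg: "0 \<le> disp g n"
  unfolding disp_def by simp

lemma dist_orbit:
  assumes g: "g \<in> carrier Gm"
  shows "dist (phi (g [^] (i::int)) bp) (phi (g [^] (j::int)) bp) = disp g (nat \<bar>j - i\<bar>)"
proof -
  have "dist (phi (g [^] i) bp) (phi (g [^] j) bp) = dist bp (phi (g [^] (j - i)) bp)"
    using int_pow_mult[OF g, of i "j - i"] phi_dist[of "g [^] i" bp] g by (simp add: phi_mult)
  also have "\<dots> = disp g (nat \<bar>j - i\<bar>)"
  proof (cases "0 \<le> j - i")
    case True
    then show ?thesis unfolding disp_def by simp
  next
    case False
    have "dist bp (phi (g [^] (j - i)) bp) = dist (phi (g [^] nat (i - j)) bp) bp"
      using False int_pow_neg[OF g, of "i - j"] pow_nat[of "i - j" Gm g] g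
        phi_dist[of "g [^] nat (i - j)" bp "phi (inv (g [^] nat (i - j))) bp"] by (simp add: phi_cancel_inv)
    then show ?thesis using False unfolding disp_def by (simp add: dist_commute)
  qed
  finally show ?thesis .
qed

lemma disp_subadditive:
  assumes g: "g \<in> carrier Gm"
  shows "disp g (m + n) \<le> disp g m + disp g n"
proof -
  have "disp g (m + n) = dist bp (phi (g [^] m) (phi (g [^] n) bp))"
    unfolding disp_def using g by (simp add: nat_pow_mult[symmetric] phi_mult)
  also have "\<dots> \<le> dist bp (phi (g [^] m) bp) + dist (phi (g [^] m) bp) (phi (g [^] m) (phi (g [^] n) bp))"
    by (rule dist_triangle)
  also have "\<dots> = disp g m + disp g n"
    unfolding disp_def using g by (simp add: phi_dist)
  finally show ?thesis .
qed

lemma disp_le: "g \<in> carrier Gm \<Longrightarrow> disp g n \<le> real n * disp g 1"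
  using subadditive_mult_add[of "disp g", OF disp_subadditive, of n 1 0] by (simp add: disp_def)

lemma disp_inv:
  assumes g: "g \<in> carrier Gm"
  shows "disp (inv g) n = disp g n"
proof -
  have "disp (inv g) n = dist (phi (g [^] n) bp) (phi (g [^] n) (phi (inv (g [^] n)) bp))"
    unfolding disp_def using g by (simp add: nat_pow_inv phi_dist)
  then show ?thesis unfolding disp_def using g by (simp add: phi_cancel_inv dist_commute)
qed

lemma loxodromicI:
  "g \<in> carrier Gm \<Longrightarrow> (\<lambda>n. disp g n / real n) \<longlonglongrightarrow> l \<Longrightarrow> 0 < l \<Longrightarrow> loxodromic bp Gm phi g"
  unfolding loxodromic_def disp_def using limI by fastforce

lemma loxodromic_carrier: "loxodromic bp Gm phi g \<Longrightarrow> g \<in> carrier Gm"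
  unfolding loxodromic_def by simp

lemma loxodromic_disp_limit:
  assumes "loxodromic bp Gm phi g"
  obtains l where "0 < l" "(\<lambda>n. disp g n / real n) \<longlonglongrightarrow> l" "\<And>n. l * real n \<le> disp g n"
proof
  have g: "g \<in> carrier Gm" using assms by (rule loxodromic_carrier)
  define l where "l = (INF n\<in>{1..}. disp g n / real n)"
  show lim: "(\<lambda>n. disp g n / real n) \<longlonglongrightarrow> l"
    unfolding l_def by (rule fekete_subadditive(1)[of "disp g", OF disp_subadditive[OF g] disp_nonneg])
  show "0 < l"
    using assms limI[OF lim] unfolding loxodromic_def disp_def by simp
  show "l * real n \<le> disp g n" for n
    using fekete_subadditive(2)[of "disp g", OF disp_subadditive[OF g] disp_nonneg, of n]
    by (cases "n = 0") (auto simp: l_def disp_def field_simps)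
qed

lemma loxodromic_inv: "loxodromic bp Gm phi g \<Longrightarrow> loxodromic bp Gm phi (inv g)"
  using loxodromic_carrier disp_inv unfolding loxodromic_def disp_def by auto

lemma loxodromic_conj:
  assumes k: "k \<in> carrier Gm" and lox: "loxodromic bp Gm phi p"
  shows "loxodromic bp Gm phi (k \<otimes> p \<otimes> inv k)"
proof -
  have p: "p \<in> carrier Gm" using lox by (rule loxodromic_carrier)
  obtain l where "0 < l" and l: "(\<lambda>n. disp p n / real n) \<longlonglongrightarrow> l"
    using loxodromic_disp_limit[OF lox] by blast
  define u where "u = phi (inv k) bp"
  have "disp (k \<otimes> p \<otimes> inv k) n = dist u (phi (p [^] n) u)" for n
    using phi_dist[of "inv k" bp] k p unfolding disp_def u_def by (simp add: phi_inv_conj_orbit[symmetric])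
  moreover have "dist (phi (p [^] n) u) (phi (p [^] n) bp) = dist u bp" for n :: nat
    using p by (simp add: phi_dist)
  ultimately have close: "\<bar>disp (k \<otimes> p \<otimes> inv k) n - disp p n\<bar> \<le> 2 * dist u bp" for n
    unfolding disp_def abs_le_iff
    using dist_triangle[of u "phi (p [^] n) u" bp] dist_triangle[of bp "phi (p [^] n) u" "phi (p [^] n) bp"]
      dist_triangle[of bp "phi (p [^] n) bp" u] dist_triangle[of u "phi (p [^] n) bp" "phi (p [^] n) u"]
    by (smt (verit) dist_commute)
  have "(\<lambda>n. (disp (k \<otimes> p \<otimes> inv k) n - disp p n) / real n) \<longlonglongrightarrow> 0"
  proof (rule Lim_null_comparison)
    show "\<forall>\<^sub>F n in sequentially. norm ((disp (k \<otimes> p \<otimes> inv k) n - disp p n) / real n) \<le> 2 * dist u bp / real n"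
      using close by (intro always_eventually allI) (simp add: divide_right_mono)
  qed (rule lim_const_over_n)
  from tendsto_add[OF l this] have "(\<lambda>n. disp (k \<otimes> p \<otimes> inv k) n / real n) \<longlonglongrightarrow> l"
    by (simp add: diff_divide_distrib)
  with \<open>0 < l\<close> k p show ?thesis by (intro loxodromicI) auto
qed

lemma dist_orbit_nat:
  assumes g: "g \<in> carrier Gm"
  shows "dist (phi (g [^] (m + n)) bp) (phi (g [^] m) bp) = disp g n"
  unfolding disp_def using g by (simp add: nat_pow_mult[symmetric] phi_mult phi_dist dist_commute)

lemma same_end_orbit_subseq:
  assumes g: "g \<in> carrier Gm" and "1 \<le> N" and conv: "conv_inf bp (\<lambda>n. phi (g [^] (N * n)) bp)"
  shows "same_end bp (\<lambda>n. phi (g [^] (N * n)) bp) (\<lambda>n. phi (g [^] n) bp)"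
proof (rule same_end_close[OF conv[unfolded conv_inf_iff_same_end]])
  show "dist (phi (g [^] j) bp) (phi (g [^] (N * (j div N))) bp) \<le> real N * disp g 1" for j
  proof -
    have "dist (phi (g [^] j) bp) (phi (g [^] (N * (j div N))) bp) = disp g (j mod N)"
      using dist_orbit_nat[OF g, of "N * (j div N)" "j mod N"] by simp
    also have "\<dots> \<le> real (j mod N) * disp g 1" by (rule disp_le[OF g])
    also have "\<dots> \<le> real N * disp g 1"
      using \<open>1 \<le> N\<close> disp_nonneg[of g 1] by (intro mult_right_mono) (auto simp: less_imp_le)
    finally show ?thesis .
  qed
  have "Z \<le> j div N" if "Z * N \<le> j" for Z j
    using div_le_mono[OF that, of N] \<open>1 \<le> N\<close> by simp
  then show "filterlim (\<lambda>j. j div N) at_top sequentially"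
    unfolding filterlim_at_top eventually_sequentially by blast
qed

lemma far_coset:
  assumes proper: "proper_action Gm phi" and G: "subgroup G Gm" and inf: "infinite (rcosets G)"
  obtains k where "k \<in> carrier Gm" "\<And>g. g \<in> G #> k \<Longrightarrow> R < dist (phi g bp) bp"
proof -
  define F where "F = {g \<in> carrier Gm. dist (phi g bp) bp \<le> R}"
  have "finite F" using proper unfolding proper_action_def F_def by blast
  then have "\<not> rcosets G \<subseteq> (\<lambda>g. G #> g) ` F"
    using inf finite_subset by blast
  then obtain C where "C \<in> rcosets G" "C \<notin> (\<lambda>g. G #> g) ` F" by blast
  then obtain k where k: "k \<in> carrier Gm" "C = G #> k" and notF: "\<And>g. g \<in> F \<Longrightarrow> G #> g \<noteq> G #> k"
    unfolding RCOSETS_def by blast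
  have "R < dist (phi g bp) bp" if "g \<in> G #> k" for g
  proof (rule ccontr)
    assume "\<not> ?thesis"
    moreover have "g \<in> carrier Gm" using that r_coset_subset_G[OF subgroup.subset[OF G] k(1)] by blast
    ultimately have "g \<in> F" unfolding F_def by simp
    moreover have "G #> g = G #> k" using repr_independence[OF that k(1) G] by simp
    ultimately show False using notF by blast
  qed
  with k(1) show thesis by (rule that)
qed

end

section \<open>Loxodromic elements of actions on hyperbolic spaces\<close>

locale hyperbolic_action = isometric_action Gm phi bp
  for Gm :: "('g, 'b) monoid_scheme" (structure) and phi :: "'g \<Rightarrow> 'a::heine_borel \<Rightarrow> 'a" and bp :: 'a +
  fixes \<delta> :: real
  assumes hyp: "delta_hyperbolic TYPE('a) \<delta>"
    and geod: "geodesic_space TYPE('a)"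

context hyperbolic_action
begin

lemma loxodromic_bilipschitz_orbit:
  assumes lox: "loxodromic bp Gm phi g"
  obtains N ell L where "1 \<le> N" "4*\<delta> \<le> ell" "0 < ell"
    "bilipschitz_seq ell L (\<lambda>i. phi (g [^] (int N * i)) bp)"
proof -
  have g: "g \<in> carrier Gm" using lox by (rule loxodromic_carrier)
  obtain l where "0 < l" and l: "\<And>n. l * real n \<le> disp g n" using loxodromic_disp_limit[OF lox] by blast
  define N where "N = nat \<lceil>4*\<delta>/l\<rceil> + 1"
  have "1 \<le> N" unfolding N_def by simp
  have "4*\<delta>/l \<le> real N" unfolding N_def by linarith
  then have "4*\<delta> \<le> l * real N" using \<open>0 < l\<close> by (simp add: field_simps)
  have "nat \<bar>int N * j - int N * i\<bar> = N * nat \<bar>i - j\<bar>" for i j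
    by (simp add: abs_mult abs_minus_commute nat_mult_distrib flip: right_diff_distrib)
  then have d: "dist (phi (g [^] (int N * i)) bp) (phi (g [^] (int N * j)) bp) = disp g (N * nat \<bar>i - j\<bar>)" for i j
    using dist_orbit[OF g] by simp
  have "bilipschitz_seq (l * real N) (real N * disp g 1) (\<lambda>i. phi (g [^] (int N * i)) bp)"
    unfolding bilipschitz_seq_def d
  proof (intro allI conjI)
    fix i j :: int
    have n: "real (N * nat \<bar>i - j\<bar>) = real N * \<bar>real_of_int (i - j)\<bar>" by simp
    show "l * real N * \<bar>real_of_int (i - j)\<bar> \<le> disp g (N * nat \<bar>i - j\<bar>)"
      using l[of "N * nat \<bar>i - j\<bar>"] unfolding n by (simp add: mult.assoc)
    show "disp g (N * nat \<bar>i - j\<bar>) \<le> real N * disp g 1 * \<bar>real_of_int (i - j)\<bar>"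
      using disp_le[OF g, of "N * nat \<bar>i - j\<bar>"] unfolding n by (simp add: algebra_simps)
  qed
  with \<open>1 \<le> N\<close> \<open>4*\<delta> \<le> l * real N\<close> \<open>0 < l\<close> show thesis by (intro that) auto
qed

lemma loxodromic_orbit_ends:
  assumes lox: "loxodromic bp Gm phi g"
  obtains ell L b where "4*\<delta> \<le> ell" "0 < ell" "bilipschitz_seq ell L b"
    "range b \<subseteq> range (\<lambda>j::int. phi (g [^] j) bp)"
    "same_end bp (\<lambda>n. b (int n)) (\<lambda>n. phi (g [^] n) bp)"
    "same_end bp (\<lambda>n. b (- int n)) (\<lambda>n. phi (inv g [^] n) bp)"
proof -
  have g: "g \<in> carrier Gm" using lox by (rule loxodromic_carrier)
  obtain N ell L where "1 \<le> N" "4*\<delta> \<le> ell" "0 < ell"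
    and bl: "bilipschitz_seq ell L (\<lambda>i. phi (g [^] (int N * i)) bp)"
    using loxodromic_bilipschitz_orbit[OF lox] by blast
  have pos: "phi (g [^] (int N * int n)) bp = phi (g [^] (N * n)) bp" for n
    by (simp add: int_pow_int flip: of_nat_mult)
  have neg: "phi (g [^] (int N * - int n)) bp = phi (inv g [^] (N * n)) bp" for n
    using g by (simp add: int_pow_neg_int nat_pow_inv flip: of_nat_mult)
  have "conv_inf bp (\<lambda>n. phi (g [^] (N * n)) bp)"
    using bilipschitz_seq_conv_inf[OF hyp bl \<open>4*\<delta> \<le> ell\<close> \<open>0 < ell\<close>] unfolding pos .
  moreover have "conv_inf bp (\<lambda>n. phi (inv g [^] (N * n)) bp)"
    using bilipschitz_seq_conv_inf[OF hyp bilipschitz_seq_reflect[OF bl] \<open>4*\<delta> \<le> ell\<close> \<open>0 < ell\<close>]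
    unfolding mult_minus_right[symmetric] neg .
  ultimately have "same_end bp (\<lambda>n. phi (g [^] (N * n)) bp) (\<lambda>n. phi (g [^] n) bp)"
    and "same_end bp (\<lambda>n. phi (inv g [^] (N * n)) bp) (\<lambda>n. phi (inv g [^] n) bp)"
    using same_end_orbit_subseq[OF g \<open>1 \<le> N\<close>] same_end_orbit_subseq[OF inv_closed[OF g] \<open>1 \<le> N\<close>]
    by simp_all
  moreover have "range (\<lambda>i. phi (g [^] (int N * i)) bp) \<subseteq> range (\<lambda>j::int. phi (g [^] j) bp)" by blast
  ultimately show thesis
    using that[OF \<open>4*\<delta> \<le> ell\<close> \<open>0 < ell\<close> bl] unfolding pos neg by blast
qed

lemma loxodromic_conv_inf:
  assumes "loxodromic bp Gm phi g"
  shows "conv_inf bp (\<lambda>n. phi (g [^] n) bp)"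
proof -
  obtain ell L b where "4*\<delta> \<le> ell" "0 < ell" "bilipschitz_seq ell L b"
    "range b \<subseteq> range (\<lambda>j::int. phi (g [^] j) bp)"
    "same_end bp (\<lambda>n. b (int n)) (\<lambda>n. phi (g [^] n) bp)"
    "same_end bp (\<lambda>n. b (- int n)) (\<lambda>n. phi (inv g [^] n) bp)"
    by (rule loxodromic_orbit_ends[OF assms])
  then show ?thesis using same_end_conv_inf[OF hyp same_end_sym] by blast
qed

lemma Ax_nonempty:
  assumes lox: "loxodromic bp Gm phi g"
  shows "Ax bp Gm phi g \<noteq> {}"
proof -
  obtain ell L b where "4*\<delta> \<le> ell" "0 < ell" and bl: "bilipschitz_seq ell L b"
    and "range b \<subseteq> range (\<lambda>j::int. phi (g [^] j) bp)"
    and pos: "same_end bp (\<lambda>n. b (int n)) (\<lambda>n. phi (g [^] n) bp)"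
    and neg: "same_end bp (\<lambda>n. b (- int n)) (\<lambda>n. phi (inv g [^] n) bp)"
    by (rule loxodromic_orbit_ends[OF lox])
  obtain \<gamma> where \<gamma>: "geodesic_line \<gamma>"
    and "same_end bp (\<lambda>n. b (int n)) (\<lambda>n. \<gamma> (real n))"
    and "same_end bp (\<lambda>n. b (- int n)) (\<lambda>n. \<gamma> (- real n))"
    by (rule exists_geodesic_line_same_ends_bilipschitz_seq[OF geod hyp bl \<open>4*\<delta> \<le> ell\<close> \<open>0 < ell\<close>])
  then have pos': "same_end bp (\<lambda>n. \<gamma> (real n)) (\<lambda>n. phi (g [^] n) bp)"
    and neg': "same_end bp (\<lambda>n. \<gamma> (- real n)) (\<lambda>n. phi (inv g [^] n) bp)"
    using same_end_trans[OF hyp same_end_sym pos] same_end_trans[OF hyp same_end_sym neg] same_end_sym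
    by blast+
  have "bdry_pt bp (\<lambda>n. \<gamma> (real n)) = fix_plus bp Gm phi g"
    unfolding fix_plus_def using pos' by (rule bdry_pt_eq[OF hyp])
  moreover have "bdry_pt bp (\<lambda>n. \<gamma> (- real n)) = fix_minus bp Gm phi g"
    unfolding fix_minus_def using neg' by (rule bdry_pt_eq[OF hyp])
  ultimately have "range \<gamma> \<subseteq> Ax bp Gm phi g"
    by (rule range_subset_Ax[OF \<gamma> same_end_conv_inf[OF hyp pos'] same_end_conv_inf[OF hyp neg']])
  then show ?thesis by blast
qed

lemma Ax_near_orbit:
  assumes lox: "loxodromic bp Gm phi p"
  obtains D where "\<And>w. w \<in> Ax bp Gm phi p \<Longrightarrow> \<exists>i::int. dist w (phi (p [^] i) bp) \<le> D"
proof -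
  obtain ell L b where "4*\<delta> \<le> ell" "0 < ell" and bl: "bilipschitz_seq ell L b"
    and orbit: "range b \<subseteq> range (\<lambda>j::int. phi (p [^] j) bp)"
    and pos: "same_end bp (\<lambda>n. b (int n)) (\<lambda>n. phi (p [^] n) bp)"
    and neg: "same_end bp (\<lambda>n. b (- int n)) (\<lambda>n. phi (inv p [^] n) bp)"
    by (rule loxodromic_orbit_ends[OF lox])
  have "\<exists>i::int. dist w (phi (p [^] i) bp) \<le> 2 * (L + 4*\<delta>)" if w_Ax: "w \<in> Ax bp Gm phi p" for w
  proof -
    obtain \<gamma> s where w: "w = \<gamma> s" and \<gamma>: "geodesic_line \<gamma>"
      and conv: "conv_inf bp (\<lambda>n. \<gamma> (real n))" "conv_inf bp (\<lambda>n. \<gamma> (- real n))"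
      and ends: "bdry_pt bp (\<lambda>n. \<gamma> (real n)) = fix_plus bp Gm phi p"
        "bdry_pt bp (\<lambda>n. \<gamma> (- real n)) = fix_minus bp Gm phi p"
      using w_Ax by (rule AxE)
    have "same_end bp (\<lambda>n. \<gamma> (real n)) (\<lambda>n. phi (p [^] n) bp)"
      using same_end_if_bdry_pt_eq[OF hyp conv(1) ends(1)[unfolded fix_plus_def]] .
    then have "same_end bp (\<lambda>n. \<gamma> (real n)) (\<lambda>n. b (int n))"
      by (rule same_end_trans[OF hyp _ same_end_sym[OF pos]])
    moreover have "same_end bp (\<lambda>n. \<gamma> (- real n)) (\<lambda>n. phi (inv p [^] n) bp)"
      using same_end_if_bdry_pt_eq[OF hyp conv(2) ends(2)[unfolded fix_minus_def]] .
    then have "same_end bp (\<lambda>n. \<gamma> (- real n)) (\<lambda>n. b (- int n))"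
      by (rule same_end_trans[OF hyp _ same_end_sym[OF neg]])
    ultimately obtain i where i: "dist (\<gamma> s) (b i) \<le> 2 * (L + 4*\<delta>)"
      using geodesic_line_near_bilipschitz_seq[OF hyp bl \<open>4*\<delta> \<le> ell\<close> \<gamma>] by blast
    from orbit obtain j :: int where "b i = phi (p [^] j) bp" by blast
    with i show ?thesis unfolding w by auto
  qed
  then show thesis by (rule that)
qed

lemma bdry_pt_conj:
  assumes k: "k \<in> carrier Gm" and q: "q \<in> carrier Gm" and conv: "conv_inf bp (\<lambda>n. phi (q [^] n) bp)"
    and \<mu>: "conv_inf bp \<mu>" "bdry_pt bp \<mu> = fix_plus bp Gm phi (k \<otimes> q \<otimes> inv k)"
  shows "conv_inf bp (\<lambda>n. phi (inv k) (\<mu> n))"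
    and "bdry_pt bp (\<lambda>n. phi (inv k) (\<mu> n)) = fix_plus bp Gm phi q"
proof -
  have "same_end bp \<mu> (\<lambda>n. phi ((k \<otimes> q \<otimes> inv k) [^] n) bp)"
    using same_end_if_bdry_pt_eq[OF hyp \<mu>(1)] \<mu>(2) unfolding fix_plus_def by blast
  then have "same_end bp (\<lambda>n. phi (inv k) (\<mu> n)) (\<lambda>n. phi (inv k) (phi ((k \<otimes> q \<otimes> inv k) [^] n) bp))"
    by (rule same_end_phi[OF inv_closed[OF k]])
  then have "same_end bp (\<lambda>n. phi (inv k) (\<mu> n)) (\<lambda>n. phi (q [^] n) (phi (inv k) bp))"
    unfolding phi_inv_conj_orbit[OF k q] .
  moreover have "dist (phi (q [^] n) bp) (phi (q [^] id n) (phi (inv k) bp)) \<le> dist bp (phi (inv k) bp)" for n :: nat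
    using q by (simp add: phi_dist)
  ultimately have "same_end bp (\<lambda>n. phi (inv k) (\<mu> n)) (\<lambda>n. phi (q [^] n) bp)"
    by (rule same_end_close[where \<sigma>=id]) (auto simp: id_def filterlim_ident)
  then show "conv_inf bp (\<lambda>n. phi (inv k) (\<mu> n))"
    and "bdry_pt bp (\<lambda>n. phi (inv k) (\<mu> n)) = fix_plus bp Gm phi q"
    unfolding fix_plus_def by (rule same_end_conv_inf[OF hyp], rule bdry_pt_eq[OF hyp])
qed

lemma Ax_conj_subset:
  assumes k: "k \<in> carrier Gm" and lox: "loxodromic bp Gm phi p"
  shows "phi (inv k) ` Ax bp Gm phi (k \<otimes> p \<otimes> inv k) \<subseteq> Ax bp Gm phi p"
proof clarify
  have p: "p \<in> carrier Gm" using lox by (rule loxodromic_carrier)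
  fix w assume "w \<in> Ax bp Gm phi (k \<otimes> p \<otimes> inv k)"
  then obtain \<gamma> s where w: "w = \<gamma> s" and \<gamma>: "geodesic_line \<gamma>"
    and conv: "conv_inf bp (\<lambda>n. \<gamma> (real n))" "conv_inf bp (\<lambda>n. \<gamma> (- real n))"
    and ends: "bdry_pt bp (\<lambda>n. \<gamma> (real n)) = fix_plus bp Gm phi (k \<otimes> p \<otimes> inv k)"
      "bdry_pt bp (\<lambda>n. \<gamma> (- real n)) = fix_minus bp Gm phi (k \<otimes> p \<otimes> inv k)"
    by (rule AxE)
  note pos = bdry_pt_conj[OF k p loxodromic_conv_inf[OF lox] conv(1) ends(1)]
  note neg = bdry_pt_conj[OF k inv_closed[OF p] loxodromic_conv_inf[OF loxodromic_inv[OF lox]] conv(2)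
      ends(2)[unfolded fix_minus_eq_fix_plus_inv inv_conj[OF k p]]]
  have "geodesic_line (\<lambda>t. phi (inv k) (\<gamma> t))" using \<gamma> k unfolding geodesic_line_def by (simp add: phi_dist)
  then have "range (\<lambda>t. phi (inv k) (\<gamma> t)) \<subseteq> Ax bp Gm phi p"
    using pos neg by (intro range_subset_Ax) (simp_all add: fix_minus_eq_fix_plus_inv)
  then show "phi (inv k) w \<in> Ax bp Gm phi p" unfolding w by blast
qed

section \<open>Confined subgroups\<close>

lemma AxG_conj_far:
  assumes G: "subgroup G Gm" and k: "k \<in> carrier Gm" and lox: "loxodromic bp Gm phi p"
    and h: "k \<otimes> p \<otimes> inv k \<in> G"
    and near: "\<And>w. w \<in> Ax bp Gm phi p \<Longrightarrow> \<exists>i::int. dist w (phi (p [^] i) bp) \<le> D"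
    and far: "\<And>g. g \<in> G #> k \<Longrightarrow> R < dist (phi g bp) bp"
    and z: "z \<in> AxG bp Gm phi G (k \<otimes> p \<otimes> inv k)"
  shows "R - D \<le> dist bp z"
proof -
  have p: "p \<in> carrier Gm" using lox by (rule loxodromic_carrier)
  obtain f w where f: "f \<in> G" and w: "w \<in> Ax bp Gm phi (k \<otimes> p \<otimes> inv k)" and z: "z = phi f w"
    using z unfolding AxG_def by blast
  have fC: "f \<in> carrier Gm" using f subgroup.subset[OF G] by blast
  have "phi (inv k) w \<in> Ax bp Gm phi p" using Ax_conj_subset[OF k lox] w by blast
  then obtain i :: int where i: "dist (phi (inv k) w) (phi (p [^] i) bp) \<le> D" using near by blast
  have "f \<otimes> (k \<otimes> p \<otimes> inv k) [^] i \<in> G"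
    using f h G by (simp add: subgroup.m_closed subgroup_int_pow_closed)
  moreover have "f \<otimes> k \<otimes> p [^] i = f \<otimes> (k \<otimes> p \<otimes> inv k) [^] i \<otimes> k"
    unfolding conj_int_pow[OF k p] using fC k p by (simp add: m_assoc)
  ultimately have "f \<otimes> k \<otimes> p [^] i \<in> G #> k" unfolding r_coset_def by blast
  then have "R < dist (phi (f \<otimes> k \<otimes> p [^] i) bp) bp" by (rule far)
  moreover have "dist z (phi (f \<otimes> k \<otimes> p [^] i) bp) = dist (phi (inv k) w) (phi (p [^] i) bp)"
  proof -
    have "z = phi (f \<otimes> k) (phi (inv k) w)" using fC k by (simp add: z phi_mult phi_cancel_inv)
    moreover have "phi (f \<otimes> k \<otimes> p [^] i) bp = phi (f \<otimes> k) (phi (p [^] i) bp)"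
      using fC k p by (simp add: phi_mult)
    ultimately show ?thesis using fC k by (simp add: phi_dist)
  qed
  ultimately show ?thesis using i dist_triangle[of "phi (f \<otimes> k \<otimes> p [^] i) bp" bp z]
    by (simp add: dist_commute)
qed

lemma confined_loxodromic_far_axes:
  assumes proper: "proper_action Gm phi" and G: "subgroup G Gm" and inf: "infinite (rcosets G)"
    and conf: "confined Gm G P" and lox: "\<forall>p \<in> P - {\<one>}. loxodromic bp Gm phi p"
  shows "\<exists>h\<in>G. loxodromic bp Gm phi h \<and> R < infdist bp (AxG bp Gm phi G h)"
proof -
  have "finite (P - {\<one>})" using conf unfolding confined_def by simp
  have "\<forall>p\<in>P - {\<one>}. \<exists>D. \<forall>w\<in>Ax bp Gm phi p. \<exists>i::int. dist w (phi (p [^] i) bp) \<le> D"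
  proof
    fix p assume "p \<in> P - {\<one>}"
    with lox obtain D where "\<And>w. w \<in> Ax bp Gm phi p \<Longrightarrow> \<exists>i::int. dist w (phi (p [^] i) bp) \<le> D"
      using Ax_near_orbit by blast
    then show "\<exists>D. \<forall>w\<in>Ax bp Gm phi p. \<exists>i::int. dist w (phi (p [^] i) bp) \<le> D" by blast
  qed
  then obtain Dp where Dp: "\<And>p w. p \<in> P - {\<one>} \<Longrightarrow> w \<in> Ax bp Gm phi p \<Longrightarrow> \<exists>i::int. dist w (phi (p [^] i) bp) \<le> Dp p"
    by metis
  define D where "D = Max (Dp ` (P - {\<one>}))"
  obtain k where k: "k \<in> carrier Gm" and far: "\<And>g. g \<in> G #> k \<Longrightarrow> R + 1 + D < dist (phi g bp) bp"
    using far_coset[OF proper G inf] by blast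
  obtain p where p: "p \<in> P - {\<one>}" and h: "k \<otimes> p \<otimes> inv k \<in> G"
  proof -
    obtain h where "h \<in> G" "inv k \<otimes> h \<otimes> inv (inv k) \<in> P - {\<one>}"
      using conf k unfolding confined_def by blast
    moreover have "k \<otimes> (inv k \<otimes> h \<otimes> inv (inv k)) \<otimes> inv k = h"
      using k \<open>h \<in> G\<close> subgroup.mem_carrier[OF G] by (simp add: m_assoc) (simp add: m_assoc[symmetric])
    ultimately show thesis using that by metis
  qed
  have "Dp p \<le> D" unfolding D_def using \<open>finite (P - {\<one>})\<close> p by simp
  have near: "\<exists>i::int. dist w (phi (p [^] i) bp) \<le> D" if w: "w \<in> Ax bp Gm phi p" for w
  proof -
    obtain i :: int where "dist w (phi (p [^] i) bp) \<le> Dp p" using Dp[OF p w] by blast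
    with \<open>Dp p \<le> D\<close> show ?thesis by (intro exI[of _ i]) simp
  qed
  have loxh: "loxodromic bp Gm phi (k \<otimes> p \<otimes> inv k)" using loxodromic_conj[OF k] lox p by blast
  have "AxG bp Gm phi G (k \<otimes> p \<otimes> inv k) \<noteq> {}"
    using Ax_nonempty[OF loxh] subgroup.one_closed[OF G] unfolding AxG_def by auto
  moreover have "R + 1 \<le> dist bp z" if "z \<in> AxG bp Gm phi G (k \<otimes> p \<otimes> inv k)" for z
    using AxG_conj_far[OF G k _ h near far that] lox p by simp
  ultimately have "R + 1 \<le> infdist bp (AxG bp Gm phi G (k \<otimes> p \<otimes> inv k))"
    unfolding infdist_def by (auto intro: cINF_greatest)
  then show ?thesis using h loxh by auto
qed

end

lemma escaping_sequence:
  fixes f :: "'c \<Rightarrow> real"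
  assumes "\<And>R. \<exists>x\<in>S. R < f x"
  obtains h :: "nat \<Rightarrow> 'c" where "inj h" "range h \<subseteq> S" "filterlim (\<lambda>n. f (h n)) at_top sequentially"
proof -
  have "\<exists>h. \<forall>n. (h n \<in> S \<and> real n \<le> f (h n)) \<and> f (h n) < f (h (Suc n))"
  proof (rule dependent_nat_choice)
    show "\<exists>x. x \<in> S \<and> real 0 \<le> f x" using assms[of 0] by force
    show "\<exists>y. (y \<in> S \<and> real (Suc n) \<le> f y) \<and> f x < f y" for x n
      using assms[of "max (real (Suc n)) (f x)"] by force
  qed
  then obtain h where h: "\<And>n. h n \<in> S" "\<And>n. real n \<le> f (h n)" "\<And>n. f (h n) < f (h (Suc n))"
    by blast
  have "strict_mono (\<lambda>n. f (h n))" using h(3) by (simp add: strict_mono_Suc_iff)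
  then have "inj h" by (metis injI strict_mono_eq)
  moreover have "filterlim (\<lambda>n. f (h n)) at_top sequentially"
    by (rule filterlim_at_top_mono[OF filterlim_real_sequentially]) (use h(2) in auto)
  ultimately show thesis using that h(1) by blast
qed

theorem lemma5p7:
  fixes Gm :: "('g, 'b) monoid_scheme"
    and \<phi> :: "'g \<Rightarrow> 'a::heine_borel \<Rightarrow> 'a"
    and G P :: "'g set"
    and bp :: 'a
  assumes "geodesic_space TYPE('a)"
    and "gromov_hyperbolic TYPE('a)"
    and "isom_action Gm \<phi>"
    and "proper_action Gm \<phi>"
    and "non_elementary bp Gm \<phi>"
    and "subgroup G Gm"
    and "infinite G"
    and "infinite (rcosets\<^bsub>Gm\<^esub> G)"
    and "confined Gm G P"
    and "\<forall>p \<in> P - {\<one>\<^bsub>Gm\<^esub>}. loxodromic bp Gm \<phi> p"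
  shows "\<exists>h :: nat \<Rightarrow> 'g. inj h \<and> (\<forall>n. h n \<in> G \<and> loxodromic bp Gm \<phi> (h n)) \<and>
           filterlim (\<lambda>n. infdist bp (AxG bp Gm \<phi> G (h n))) at_top sequentially"
proof -
  obtain \<delta> where "delta_hyperbolic TYPE('a) \<delta>" using assms(2) gromov_hyperbolic_iff by blast
  then interpret hyperbolic_action Gm \<phi> bp \<delta>
    using assms(1,3) by unfold_locales
  have "\<exists>h\<in>{h \<in> G. loxodromic bp Gm \<phi> h}. R < infdist bp (AxG bp Gm \<phi> G h)" for R
    using confined_loxodromic_far_axes[OF assms(4,6,8,9,10)] by blast
  then obtain h where "inj h" "range h \<subseteq> {h \<in> G. loxodromic bp Gm \<phi> h}"
    "filterlim (\<lambda>n. infdist bp (AxG bp Gm \<phi> G (h n))) at_top sequentially"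
    by (rule escaping_sequence)
  then show ?thesis by blast
qed

end
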